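(* Let $G$ be a recursively presented group. Then for every finite generating set $S$ of $G$, the skeleton subshift $X_{G,S}$ is effective.
   Context: $G$ is recursively presented if $G\cong\mathbb{F}_S/\langle\langle R\rangle\rangle$ for some finite set $S$ and recursively enumerable set $R$ of words. For a finite generating set $S$, the skeleton subshift $X_{G,S}\subseteq(S\cup S^{-1})^{\mathbb{Z}}$ is the set of bi-infinite sequences none of whose non-empty finite factors represents $1_G$. A subshift over a finite alphabet is a set of bi-infinite sequences avoiding all words of a set $\mathcal F$ of forbidden finite words; it is effective if $\mathcal F$ can be chosen to be a decidable language. *)

theory Defs
  imports "HOL-Algebra.Algebra" "HOL-Library.Nat_Bijection"
begin

datatype recf =
    Zero
  | Succ
  | Proj nat
  | Comp recf "recf list"
  | Prec recf recf
  | Minim recf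

inductive ev :: "recf \<Rightarrow> nat list \<Rightarrow> nat \<Rightarrow> bool" where
  ev_zero: "ev Zero xs 0"
| ev_succ: "ev Succ (x # xs) (Suc x)"
| ev_proj: "i < length xs \<Longrightarrow> ev (Proj i) xs (xs ! i)"
| ev_comp: "list_all2 (\<lambda>g z. ev g xs z) gs zs \<Longrightarrow> ev f zs y \<Longrightarrow> ev (Comp f gs) xs y"
| ev_prec0: "ev f xs y \<Longrightarrow> ev (Prec f g) (0 # xs) y"
| ev_precS: "ev (Prec f g) (n # xs) z \<Longrightarrow> ev g (z # n # xs) y \<Longrightarrow> ev (Prec f g) (Suc n # xs) y"
| ev_minim: "ev f (n # xs) 0 \<Longrightarrow> (\<forall>m<n. \<exists>z. ev f (m # xs) z \<and> z \<noteq> 0) \<Longrightarrow> ev (Minim f) xs n"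
monos list_all2_mono

definition decidable_set :: "nat set \<Rightarrow> bool" where
  "decidable_set A \<longleftrightarrow> (\<exists>f. \<forall>n. ev f [n] (if n \<in> A then 1 else 0))"

definition re_set :: "nat set \<Rightarrow> bool" where
  "re_set A \<longleftrightarrow> (\<exists>f. \<forall>n. n \<in> A \<longleftrightarrow> (\<exists>y. ev f [n] y))"

text \<open>A letter (s, True) stands for s, the letter (s, False) for s^{-1}.\<close>
type_synonym 'a word = "('a \<times> bool) list"

definition inv_letter :: "'a \<times> bool \<Rightarrow> 'a \<times> bool" where
  "inv_letter x = (fst x, \<not> snd x)"

definition word_inv :: "'a word \<Rightarrow> 'a word" where
  "word_inv w = rev (map inv_letter w)"

fun red_cons :: "'a \<times> bool \<Rightarrow> 'a word \<Rightarrow> 'a word" where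
  "red_cons x [] = [x]"
| "red_cons x (y # ys) = (if y = inv_letter x then ys else x # y # ys)"

definition reduce :: "'a word \<Rightarrow> 'a word" where
  "reduce w = foldr red_cons w []"

definition reduced :: "'a word \<Rightarrow> bool" where
  "reduced w \<longleftrightarrow> (\<forall>i. Suc i < length w \<longrightarrow> w ! Suc i \<noteq> inv_letter (w ! i))"

definition free_group :: "'a set \<Rightarrow> 'a word monoid" where
  "free_group S = \<lparr>carrier = {w. set w \<subseteq> S \<times> UNIV \<and> reduced w},
                   monoid.mult = (\<lambda>u v. reduce (u @ v)), one = []\<rparr>"

definition normal_closure_rel :: "'a set \<Rightarrow> 'a word set \<Rightarrow> 'a word set" where
  "normal_closure_rel S R =
     generate (free_group S)
       {reduce (g @ r @ word_inv g) | g r. g \<in> carrier (free_group S) \<and> r \<in> R}"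

definition letter_code :: "nat \<times> bool \<Rightarrow> nat" where
  "letter_code x = prod_encode (fst x, of_bool (snd x))"

definition word_code :: "nat word \<Rightarrow> nat" where
  "word_code w = list_encode (map letter_code w)"

definition recursively_presented :: "('g, 'b) monoid_scheme \<Rightarrow> bool" where
  "recursively_presented G \<longleftrightarrow>
     (\<exists>(S :: nat set) R. finite S \<and> R \<subseteq> lists (S \<times> UNIV) \<and> re_set (word_code ` R) \<and>
        is_iso G (FactGroup (free_group S) (normal_closure_rel S R)))"

definition factor :: "(int \<Rightarrow> 'a) \<Rightarrow> int \<Rightarrow> nat \<Rightarrow> 'a list" where
  "factor x i n = map (\<lambda>k. x (i + int k)) [0..<n]"

definition full_shift :: "'a set \<Rightarrow> (int \<Rightarrow> 'a) set" where
  "full_shift A = {x. \<forall>i. x i \<in> A}"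

definition shift_of :: "'a set \<Rightarrow> 'a list set \<Rightarrow> (int \<Rightarrow> 'a) set" where
  "shift_of A F = {x \<in> full_shift A. \<forall>i n. factor x i n \<notin> F}"

text \<open>Effective subshift over a finite alphabet A: X = X_F with F a decidable language,
  decidability being measured through an (arbitrary) injective coding of the finite alphabet by naturals.\<close>
definition effective_subshift :: "'a set \<Rightarrow> (int \<Rightarrow> 'a) set \<Rightarrow> bool" where
  "effective_subshift Alph Y \<longleftrightarrow>
     (\<exists>Forb code. Forb \<subseteq> lists Alph \<and> inj_on code Alph \<and>
        decidable_set ((\<lambda>w. list_encode (map code w)) ` Forb) \<and> Y = shift_of Alph Forb)"

definition letter_eval :: "('g, 'b) monoid_scheme \<Rightarrow> 'g \<times> bool \<Rightarrow> 'g" where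
  "letter_eval G x = (if snd x then fst x else inv\<^bsub>G\<^esub> (fst x))"

definition word_eval :: "('g, 'b) monoid_scheme \<Rightarrow> 'g word \<Rightarrow> 'g" where
  "word_eval G w = foldr (\<lambda>x y. letter_eval G x \<otimes>\<^bsub>G\<^esub> y) w \<one>\<^bsub>G\<^esub>"

definition skeleton :: "('g, 'b) monoid_scheme \<Rightarrow> 'g set \<Rightarrow> (int \<Rightarrow> 'g \<times> bool) set" where
  "skeleton G S = {x \<in> full_shift (S \<times> UNIV).
                     \<forall>i n. n > 0 \<longrightarrow> word_eval G (factor x i n) \<noteq> \<one>\<^bsub>G\<^esub>}"

end

theory Submission
  imports Defs
begin

text \<open>Let \<open>G\<close> be isomorphic to \<open>F(S') / \<langle>\<langle>R\<rangle>\<rangle>\<close> and send each generator in \<open>S\<close> to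
  a word over \<open>S'\<close> representing it. A word over \<open>S\<close> is then trivial in \<open>G\<close> iff its image is
  freely equal to a product of conjugates of relators and their inverses. Such products can be
  enumerated and \<open>R\<close> is recursively enumerable, so the nonempty trivial words form a recursively
  enumerable set \<open>W\<close>, and the skeleton subshift is the subshift with forbidden words \<open>W\<close>.
  A subshift with a recursively enumerable set of forbidden words is effective: declaring a word
  forbidden as soon as one of its nonempty factors is enumerated within as many steps as the word
  is long gives a decidable set of forbidden words defining the same subshift.

  Computability is expressed through a fuel-bounded evaluator of partial recursive programs,
  which is itself primitive recursive; hence recursively enumerable sets are the projections of
  decidable relations.\<close>

section \<open>Computable functions and decidable predicates\<close>

definition computable :: "(nat \<Rightarrow> nat) \<Rightarrow> bool" where
  "computable F \<longleftrightarrow> (\<exists>f. \<forall>n. ev f [n] (F n))"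

definition decidable :: "(nat \<Rightarrow> bool) \<Rightarrow> bool" where
  "decidable P \<longleftrightarrow> computable (\<lambda>n. if P n then 1 else 0)"

lemma decidable_set_iff_decidable: "decidable_set A \<longleftrightarrow> decidable (\<lambda>n. n \<in> A)"
  by (simp add: decidable_set_def decidable_def computable_def)

lemma ev_Comp1: "ev g xs z \<Longrightarrow> ev f [z] y \<Longrightarrow> ev (Comp f [g]) xs y"
  by (rule ev_comp[of _ _ "[z]"]) auto

lemma ev_Comp2: "ev g1 xs z1 \<Longrightarrow> ev g2 xs z2 \<Longrightarrow> ev f [z1, z2] y \<Longrightarrow> ev (Comp f [g1, g2]) xs y"
  by (rule ev_comp[of _ _ "[z1, z2]"]) auto

lemma ev_Proj0: "ev (Proj 0) (x # xs) x"
  using ev_proj[of 0 "x # xs"] by simp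

lemma ev_Proj1: "ev (Proj 1) (x # y # xs) y"
  using ev_proj[of 1 "x # y # xs"] by simp

lemma ev_Proj2: "ev (Proj 2) (x # y # z # xs) z"
  using ev_proj[of 2 "x # y # z # xs"] by simp

lemma computable_id: "computable (\<lambda>n. n)"
  unfolding computable_def using ev_Proj0 by blast

lemma computable_comp: "computable F \<Longrightarrow> computable G \<Longrightarrow> computable (\<lambda>n. F (G n))"
  unfolding computable_def using ev_Comp1 by blast

lemma computable_binop:
  "(\<And>a b. ev h [a, b] (H a b)) \<Longrightarrow> computable A \<Longrightarrow> computable B \<Longrightarrow> computable (\<lambda>n. H (A n) (B n))"
  unfolding computable_def using ev_Comp2 by blast

lemma computable_Suc: "computable F \<Longrightarrow> computable (\<lambda>n. Suc (F n))"
  unfolding computable_def using ev_Comp1 ev_succ by blast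

lemma computable_const: "computable (\<lambda>n. c)"
proof (induction c)
  case 0
  show ?case unfolding computable_def using ev_zero by blast
next
  case (Suc c)
  then show ?case using computable_Suc by blast
qed

definition add_prog :: recf where
  "add_prog = Prec (Proj 0) (Comp Succ [Proj 0])"

lemma ev_add_prog: "ev add_prog [a, b] (a + b)"
proof (induction a)
  case 0
  then show ?case unfolding add_prog_def using ev_prec0[OF ev_Proj0] by simp
next
  case (Suc a)
  have "ev (Comp Succ [Proj 0]) [a + b, a, b] (Suc (a + b))"
    by (rule ev_Comp1[OF ev_Proj0 ev_succ])
  then show ?case using ev_precS[OF Suc[unfolded add_prog_def]] unfolding add_prog_def by simp
qed

definition mult_prog :: recf where
  "mult_prog = Prec Zero (Comp add_prog [Proj 0, Proj 2])"

lemma ev_mult_prog: "ev mult_prog [a, b] (a * b)"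
proof (induction a)
  case 0
  then show ?case unfolding mult_prog_def using ev_prec0[OF ev_zero] by simp
next
  case (Suc a)
  have "ev (Comp add_prog [Proj 0, Proj 2]) [a * b, a, b] (a * b + b)"
    by (rule ev_Comp2[OF ev_Proj0 ev_Proj2 ev_add_prog])
  then show ?case using ev_precS[OF Suc[unfolded mult_prog_def]] unfolding mult_prog_def
    by (simp add: add.commute)
qed

definition pred_prog :: recf where
  "pred_prog = Prec Zero (Proj 1)"

lemma ev_pred_prog: "ev pred_prog [n] (n - 1)"
proof (induction n)
  case 0
  show ?case unfolding pred_prog_def using ev_prec0[OF ev_zero] by simp
next
  case (Suc n)
  show ?case unfolding pred_prog_def
    using ev_precS[OF Suc[unfolded pred_prog_def] ev_Proj1] by simp
qed

text \<open>Primitive recursion runs over the first argument, so truncated subtraction is first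
  computed with its arguments swapped.\<close>

definition rdiff_prog :: recf where
  "rdiff_prog = Prec (Proj 0) (Comp pred_prog [Proj 0])"

lemma ev_rdiff_prog: "ev rdiff_prog [b, a] (a - b)"
proof (induction b)
  case 0
  then show ?case unfolding rdiff_prog_def using ev_prec0[OF ev_Proj0] by simp
next
  case (Suc b)
  have "ev (Comp pred_prog [Proj 0]) [a - b, b, a] (a - b - 1)"
    by (rule ev_Comp1[OF ev_Proj0 ev_pred_prog])
  then show ?case using ev_precS[OF Suc[unfolded rdiff_prog_def]] unfolding rdiff_prog_def by simp
qed

definition diff_prog :: recf where
  "diff_prog = Comp rdiff_prog [Proj 1, Proj 0]"

lemma ev_diff_prog: "ev diff_prog [a, b] (a - b)"
  unfolding diff_prog_def by (rule ev_Comp2[OF ev_Proj1 ev_Proj0 ev_rdiff_prog])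

definition triangle_prog :: recf where
  "triangle_prog = Prec Zero (Comp add_prog [Proj 0, Comp Succ [Proj 1]])"

lemma ev_triangle_prog: "ev triangle_prog [n] (triangle n)"
proof (induction n)
  case 0
  then show ?case unfolding triangle_prog_def using ev_prec0[OF ev_zero] by simp
next
  case (Suc n)
  have "ev (Comp add_prog [Proj 0, Comp Succ [Proj 1]]) [triangle n, n] (triangle n + Suc n)"
    by (rule ev_Comp2[OF ev_Proj0 ev_Comp1[OF ev_Proj1 ev_succ] ev_add_prog])
  then show ?case
    using ev_precS[OF Suc[unfolded triangle_prog_def]] unfolding triangle_prog_def by simp
qed

definition prod_encode_prog :: recf where
  "prod_encode_prog = Comp add_prog [Comp triangle_prog [add_prog], Proj 0]"

lemma ev_prod_encode_prog: "ev prod_encode_prog [a, b] (prod_encode (a, b))"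
  unfolding prod_encode_prog_def prod_encode_def
  using ev_Comp2[OF ev_Comp1[OF ev_add_prog ev_triangle_prog] ev_Proj0 ev_add_prog] by simp

lemma computable_add: "computable A \<Longrightarrow> computable B \<Longrightarrow> computable (\<lambda>n. A n + B n)"
  by (rule computable_binop[OF ev_add_prog])

lemma computable_diff: "computable A \<Longrightarrow> computable B \<Longrightarrow> computable (\<lambda>n. A n - B n)"
  by (rule computable_binop[OF ev_diff_prog])

lemma computable_mult: "computable A \<Longrightarrow> computable B \<Longrightarrow> computable (\<lambda>n. A n * B n)"
  by (rule computable_binop[OF ev_mult_prog])

lemma computable_prod_encode:
  "computable A \<Longrightarrow> computable B \<Longrightarrow> computable (\<lambda>n. prod_encode (A n, B n))"
  by (rule computable_binop[OF ev_prod_encode_prog])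

text \<open>Inverting the Cantor pairing needs the diagonal on which \<open>m\<close> lies, which is found by
  unbounded search.\<close>

definition diagonal :: "nat \<Rightarrow> nat" where
  "diagonal m = (LEAST s. m < triangle (Suc s))"

lemma diagonal_upper: "m < triangle (Suc (diagonal m))"
proof -
  have "m < triangle (Suc m)" by (induction m) auto
  then show ?thesis unfolding diagonal_def by (rule LeastI)
qed

lemma diagonal_least: "s < diagonal m \<Longrightarrow> triangle (Suc s) \<le> m"
  unfolding diagonal_def using not_less_Least by (metis not_less)

lemma diagonal_lower: "triangle (diagonal m) \<le> m"
  using diagonal_least[of "diagonal m - 1" m] by (cases "diagonal m") auto

lemma prod_decode_diagonal:
  "prod_decode m = (m - triangle (diagonal m), diagonal m - (m - triangle (diagonal m)))"
proof -
  let ?s = "diagonal m" let ?a = "m - triangle ?s"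
  have "prod_encode (?a, ?s - ?a) = m"
    unfolding prod_encode_def using diagonal_lower[of m] diagonal_upper[of m] by simp
  then show ?thesis by (metis prod_encode_inverse)
qed

definition diagonal_test_prog :: recf where
  "diagonal_test_prog = Comp diff_prog [Comp Succ [Proj 1], Comp triangle_prog [Comp Succ [Proj 0]]]"

lemma ev_diagonal_test_prog: "ev diagonal_test_prog [s, m] (Suc m - triangle (Suc s))"
  unfolding diagonal_test_prog_def
  by (rule ev_Comp2[OF ev_Comp1[OF ev_Proj1 ev_succ]
        ev_Comp1[OF ev_Comp1[OF ev_Proj0 ev_succ] ev_triangle_prog] ev_diff_prog])

lemma ev_diagonal_prog: "ev (Minim diagonal_test_prog) [m] (diagonal m)"
proof (rule ev_minim)
  show "ev diagonal_test_prog [diagonal m, m] 0"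
    using ev_diagonal_test_prog[of "diagonal m" m] diagonal_upper[of m] by simp
  show "\<forall>k<diagonal m. \<exists>z. ev diagonal_test_prog [k, m] z \<and> z \<noteq> 0"
    using ev_diagonal_test_prog diagonal_least by (metis diff_is_0_eq not_less_eq_eq)
qed

abbreviation pfst :: "nat \<Rightarrow> nat" where "pfst n \<equiv> fst (prod_decode n)"
abbreviation psnd :: "nat \<Rightarrow> nat" where "psnd n \<equiv> snd (prod_decode n)"

lemma computable_diagonal: "computable diagonal"
  unfolding computable_def using ev_diagonal_prog by blast

lemma computable_triangle: "computable triangle"
  unfolding computable_def using ev_triangle_prog by blast

lemma computable_pfst: "computable F \<Longrightarrow> computable (\<lambda>n. pfst (F n))"
proof -
  have "computable (\<lambda>m. m - triangle (diagonal m))"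
    by (intro computable_diff computable_id
        computable_comp[OF computable_triangle computable_diagonal])
  then have "computable pfst"
    by (simp add: prod_decode_diagonal)
  then show "computable F \<Longrightarrow> computable (\<lambda>n. pfst (F n))"
    by (rule computable_comp)
qed

lemma computable_psnd: "computable F \<Longrightarrow> computable (\<lambda>n. psnd (F n))"
proof -
  have "computable (\<lambda>m. diagonal m - pfst m)"
    by (intro computable_diff computable_diagonal computable_pfst computable_id)
  then have "computable psnd"
    by (simp add: prod_decode_diagonal)
  then show "computable F \<Longrightarrow> computable (\<lambda>n. psnd (F n))"
    by (rule computable_comp)
qed

lemma computable_If:
  assumes "decidable P" "computable A" "computable B"
  shows "computable (\<lambda>n. if P n then A n else B n)"
proof -
  have "computable (\<lambda>n. A n * (if P n then 1 else 0) + B n * (1 - (if P n then 1 else 0)))"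
    using assms unfolding decidable_def
    by (intro computable_add computable_mult computable_diff computable_const)
  then show ?thesis by (simp add: if_distrib cong: if_cong)
qed

lemma decidable_comp: "decidable P \<Longrightarrow> computable G \<Longrightarrow> decidable (\<lambda>n. P (G n))"
  unfolding decidable_def by (rule computable_comp[of "\<lambda>n. if P n then 1 else 0"])

lemma decidable_comp2:
  "decidable (\<lambda>m. Q (pfst m) (psnd m)) \<Longrightarrow> computable A \<Longrightarrow> computable B \<Longrightarrow> decidable (\<lambda>n. Q (A n) (B n))"
  using decidable_comp[of "\<lambda>m. Q (pfst m) (psnd m)" "\<lambda>n. prod_encode (A n, B n)"]
  by (simp add: computable_prod_encode)

lemma decidable_nonzero: "computable A \<Longrightarrow> decidable (\<lambda>n. A n \<noteq> 0)"
proof -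
  assume "computable A"
  then have "computable (\<lambda>n. 1 - (1 - A n))" by (intro computable_diff computable_const)
  moreover have "(\<lambda>n. 1 - (1 - A n)) = (\<lambda>n. if A n \<noteq> 0 then 1 else 0)" by auto
  ultimately show ?thesis unfolding decidable_def by simp
qed

lemma decidable_eq: "computable A \<Longrightarrow> computable B \<Longrightarrow> decidable (\<lambda>n. A n = B n)"
proof -
  assume "computable A" "computable B"
  then have "computable (\<lambda>n. 1 - ((A n - B n) + (B n - A n)))"
    by (intro computable_diff computable_add computable_const)
  moreover have "(\<lambda>n. 1 - ((A n - B n) + (B n - A n))) = (\<lambda>n. if A n = B n then 1 else 0)" by auto
  ultimately show ?thesis unfolding decidable_def by simp
qed

lemma decidable_less: "computable A \<Longrightarrow> computable B \<Longrightarrow> decidable (\<lambda>n. A n < B n)"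
proof -
  assume "computable A" "computable B"
  then have "decidable (\<lambda>n. B n - A n \<noteq> 0)" by (intro decidable_nonzero computable_diff)
  then show ?thesis by (simp add: not_le)
qed

lemma decidable_le: "computable A \<Longrightarrow> computable B \<Longrightarrow> decidable (\<lambda>n. A n \<le> B n)"
proof -
  assume "computable A" "computable B"
  then have "decidable (\<lambda>n. A n < Suc (B n))" by (intro decidable_less computable_Suc)
  then show ?thesis by (simp add: less_Suc_eq_le)
qed

lemma decidable_not: "decidable P \<Longrightarrow> decidable (\<lambda>n. \<not> P n)"
proof -
  assume "decidable P"
  then have "computable (\<lambda>n. if P n then 0 else 1)" by (intro computable_If computable_const)
  moreover have "(\<lambda>n. if P n then 0 else 1) = (\<lambda>n. if \<not> P n then 1 else (0::nat))" by auto
  ultimately show ?thesis unfolding decidable_def by simp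
qed

lemma decidable_conj: "decidable P \<Longrightarrow> decidable Q \<Longrightarrow> decidable (\<lambda>n. P n \<and> Q n)"
proof -
  assume "decidable P" "decidable Q"
  then have "computable (\<lambda>n. if P n then (if Q n then 1 else 0) else 0)"
    by (intro computable_If computable_const)
  moreover have "(\<lambda>n. if P n then (if Q n then 1 else 0) else 0) =
      (\<lambda>n. if P n \<and> Q n then 1 else (0::nat))"
    by auto
  ultimately show ?thesis unfolding decidable_def by simp
qed

lemma decidable_disj: "decidable P \<Longrightarrow> decidable Q \<Longrightarrow> decidable (\<lambda>n. P n \<or> Q n)"
proof -
  assume "decidable P" "decidable Q"
  then have "decidable (\<lambda>n. \<not> (\<not> P n \<and> \<not> Q n))" by (intro decidable_not decidable_conj)
  then show ?thesis by simp
qed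

lemma computable_funpow:
  assumes "computable F" shows "computable K \<Longrightarrow> computable Y \<Longrightarrow> computable (\<lambda>n. (F ^^ K n) (Y n))"
proof -
  obtain f where f: "\<forall>n. ev f [n] (F n)" using assms unfolding computable_def by blast
  have "ev (Prec (Proj 0) (Comp f [Proj 0])) [k, x] ((F ^^ k) x)" for k x
  proof (induction k)
    case 0
    then show ?case using ev_prec0[OF ev_Proj0] by simp
  next
    case (Suc k)
    have "ev (Comp f [Proj 0]) [(F ^^ k) x, k, x] (F ((F ^^ k) x))"
      using ev_Comp1[OF ev_Proj0] f by blast
    then show ?case using ev_precS[OF Suc] by simp
  qed
  then show "computable K \<Longrightarrow> computable Y \<Longrightarrow> computable (\<lambda>n. (F ^^ K n) (Y n))"
    by (rule computable_binop)
qed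

text \<open>Functions of several arguments are handled through the pairing
  \<^term>\<open>\<lambda>m. H (pfst m) (pfst (psnd m)) (psnd (psnd m))\<close>; here the last argument
  is a parameter that the recursion carries along unchanged.\<close>

lemma computable_rec_nat:
  assumes A: "computable A" and K: "computable K"
    and H: "computable (\<lambda>m. H (pfst m) (pfst (psnd m)) (psnd (psnd m)))"
  shows "computable (\<lambda>n. rec_nat (A n) (\<lambda>i acc. H i acc n) (K n))"
proof -
  define step where "step st =
    prod_encode (Suc (pfst st),
      prod_encode (H (pfst st) (pfst (psnd st)) (psnd (psnd st)), psnd (psnd st)))"
    for st
  have step: "computable step"
    unfolding step_def using H by (intro computable_prod_encode computable_Suc computable_pfst
        computable_psnd computable_id)
  have iter: "(step ^^ k) (prod_encode (0, prod_encode (a, n))) =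
      prod_encode (k, prod_encode (rec_nat a (\<lambda>i acc. H i acc n) k, n))" for k a n
    by (induction k) (simp_all add: step_def)
  have "computable (\<lambda>n. pfst (psnd ((step ^^ K n) (prod_encode (0, prod_encode (A n, n))))))"
    using A K by (intro computable_pfst computable_psnd computable_funpow[OF step]
        computable_prod_encode computable_const computable_id)
  then show ?thesis unfolding iter by simp
qed

lemma decidable_bex_less:
  assumes P: "decidable (\<lambda>m. P (pfst m) (psnd m))" and K: "computable K"
  shows "decidable (\<lambda>n. \<exists>i<K n. P i n)"
proof -
  have "decidable (\<lambda>m. P (pfst m) (psnd (psnd m)))"
    using decidable_comp[OF P, of "\<lambda>m. prod_encode (pfst m, psnd (psnd m))"]
    by (simp add: computable_prod_encode computable_pfst computable_psnd computable_id)
  then have "computable (\<lambda>m. if pfst (psnd m) \<noteq> 0 \<or> P (pfst m) (psnd (psnd m)) then 1 else 0)"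
    by (intro computable_If decidable_disj decidable_nonzero computable_pfst computable_psnd
        computable_id computable_const)
  then have "computable (\<lambda>n. rec_nat 0 (\<lambda>i acc. if acc \<noteq> 0 \<or> P i n then 1 else 0) (K n))"
    using K by (intro computable_rec_nat[where H = "\<lambda>i acc n. if acc \<noteq> 0 \<or> P i n then 1 else 0"]
        computable_const) simp_all
  moreover have search:
    "rec_nat 0 (\<lambda>i acc. if acc \<noteq> 0 \<or> P i n then 1 else 0) k = (if \<exists>i<k. P i n then 1 else 0)"
    for k n
    by (induction k) (auto simp: less_Suc_eq)
  ultimately show ?thesis unfolding decidable_def search[symmetric] by blast
qed

lemma computable_table: "finite A \<Longrightarrow> computable (\<lambda>n. if n \<in> A then f n else 0)"
proof (induction A rule: finite_induct)
  case empty
  then show ?case by (simp add: computable_const)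
next
  case (insert a A)
  have "computable (\<lambda>n. if n = a then f a else if n \<in> A then f n else 0)"
    by (rule computable_If[OF decidable_eq[OF computable_id computable_const] computable_const
        insert.IH])
  moreover have "(\<lambda>n. if n = a then f a else if n \<in> A then f n else 0) =
      (\<lambda>n. if n \<in> insert a A then f n else 0)"
    by auto
  ultimately show ?case by simp
qed

lemma decidable_finite: "finite A \<Longrightarrow> decidable (\<lambda>n. n \<in> A)"
  unfolding decidable_def using computable_table[of A "\<lambda>_. 1"] by (simp cong: if_cong)

section \<open>Coded lists\<close>

lemma list_decode_Suc: "list_decode (Suc d) = pfst d # list_decode (psnd d)"
  by (simp split: prod.split)

declare list_decode.simps(2)[simp del] list_decode_Suc[simp]

lemma length_list_decode_le: "length (list_decode c) \<le> c"
proof (induction c rule: list_decode.induct)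
  case (2 n)
  have "psnd n \<le> n" by (metis le_prod_encode_2 prod.collapse prod_decode_inverse)
  moreover have "length (list_decode (psnd n)) \<le> psnd n" using 2 by (metis prod.collapse)
  ultimately show ?case by simp
qed simp

text \<open>A fold over a coded list is run by iterating a step on the triple
  (rest of the list, accumulator, parameter) as often as the code is large, which bounds the
  length of the list.\<close>

lemma computable_foldl:
  assumes A: "computable A" and L: "computable L"
    and F: "computable (\<lambda>m. F (pfst m) (pfst (psnd m)) (psnd (psnd m)))"
  shows "computable (\<lambda>n. foldl (\<lambda>acc x. F acc x n) (A n) (list_decode (L n)))"
proof -
  define step where "step st = (if pfst st = 0 then st else
      prod_encode (psnd (pfst st - 1),
        prod_encode (F (pfst (psnd st)) (pfst (pfst st - 1)) (psnd (psnd st)), psnd (psnd st))))"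
    for st
  have iter: "(step ^^ k) (prod_encode (c, prod_encode (a, n))) =
      prod_encode (0, prod_encode (foldl (\<lambda>acc x. F acc x n) a (list_decode c), n))"
    if "length (list_decode c) \<le> k" for k c a n
    using that
  proof (induction k arbitrary: c a)
    case 0
    then show ?case
      by (metis le_zero_eq length_0_conv list_decode_inverse list_encode.simps(1) funpow_0 foldl_Nil)
  next
    case (Suc k)
    show ?case
    proof (cases c)
      case 0
      have fixed: "step (prod_encode (0, y)) = prod_encode (0, y)" for y
        by (simp add: step_def)
      have "(step ^^ j) (prod_encode (0, y)) = prod_encode (0, y)" for j y
        by (induction j) (simp_all add: fixed)
      then show ?thesis using 0 fixed by simp
    next
      case (Suc d)
      then have "step (prod_encode (c, prod_encode (a, n))) =
          prod_encode (psnd d, prod_encode (F a (pfst d) n, n))"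
        by (simp add: step_def)
      moreover have "length (list_decode (psnd d)) \<le> k" using Suc.prems Suc by simp
      ultimately show ?thesis using Suc.IH Suc by (simp add: funpow_swap1)
    qed
  qed
  have "computable (\<lambda>st. F (pfst (psnd st)) (pfst (pfst st - 1)) (psnd (psnd st)))"
    using computable_comp[OF F,
        of "\<lambda>st. prod_encode (pfst (psnd st), prod_encode (pfst (pfst st - 1), psnd (psnd st)))"]
    by (simp add: computable_prod_encode computable_pfst computable_psnd computable_id
        computable_diff computable_const)
  then have "computable step" unfolding step_def
    by (intro computable_If decidable_eq computable_prod_encode computable_pfst computable_psnd
        computable_diff computable_id computable_const)
  then have "computable (\<lambda>n. pfst (psnd ((step ^^ L n) (prod_encode (L n, prod_encode (A n, n))))))"
    using A L by (intro computable_pfst computable_psnd computable_funpow computable_prod_encode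
        computable_id)
  then show ?thesis unfolding iter[OF length_list_decode_le] by simp
qed

lemma computable_length: "computable A \<Longrightarrow> computable (\<lambda>n. length (list_decode (A n)))"
proof -
  have "foldl (\<lambda>acc x. Suc acc) a xs = a + length xs" for a and xs :: "nat list"
    by (induction xs arbitrary: a) auto
  moreover assume "computable A"
  then have "computable (\<lambda>n. foldl (\<lambda>acc x. Suc acc) 0 (list_decode (A n)))"
    by (intro computable_foldl computable_Suc computable_pfst computable_const computable_id)
  ultimately show ?thesis by simp
qed

lemma decidable_list_all:
  assumes P: "decidable (\<lambda>m. P (pfst m) (psnd m))" and A: "computable A"
  shows "decidable (\<lambda>n. \<forall>x\<in>set (list_decode (A n)). P x n)"
proof -
  have fold: "(foldl (\<lambda>acc x. if acc \<noteq> 0 \<and> P x n then 1 else 0) a xs \<noteq> (0::nat)) \<longleftrightarrow>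
      a \<noteq> 0 \<and> (\<forall>x\<in>set xs. P x n)" for a xs n
    by (induction xs arbitrary: a) auto
  have "decidable (\<lambda>m. P (pfst (psnd m)) (psnd (psnd m)))"
    using decidable_comp[OF P, of psnd] by (simp add: computable_psnd computable_id)
  then have "computable (\<lambda>n. foldl (\<lambda>acc x. if acc \<noteq> 0 \<and> P x n then 1 else 0) 1 (list_decode (A n)))"
    using A by (intro computable_foldl computable_If decidable_conj decidable_nonzero
        computable_pfst computable_id computable_const)
  then have "decidable (\<lambda>n.
      foldl (\<lambda>acc x. if acc \<noteq> 0 \<and> P x n then 1 else 0) 1 (list_decode (A n)) \<noteq> (0::nat))"
    by (rule decidable_nonzero)
  then show ?thesis unfolding fold by simp
qed

definition cons_code :: "nat \<Rightarrow> nat \<Rightarrow> nat" where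
  "cons_code x a = Suc (prod_encode (x, a))"

lemma list_decode_cons_code[simp]: "list_decode (cons_code x a) = x # list_decode a"
  by (simp add: cons_code_def)

lemma computable_cons_code: "computable A \<Longrightarrow> computable B \<Longrightarrow> computable (\<lambda>n. cons_code (A n) (B n))"
  unfolding cons_code_def by (intro computable_Suc computable_prod_encode)

lemma foldl_cons_code:
  "list_decode (foldl (\<lambda>acc x. cons_code (f x) acc) a xs) = rev (map f xs) @ list_decode a"
  by (induction xs arbitrary: a) auto

definition rev_map_code :: "(nat \<Rightarrow> nat) \<Rightarrow> nat \<Rightarrow> nat" where
  "rev_map_code f c = foldl (\<lambda>acc x. cons_code (f x) acc) 0 (list_decode c)"

lemma list_decode_rev_map_code[simp]: "list_decode (rev_map_code f c) = rev (map f (list_decode c))"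
  by (simp add: rev_map_code_def foldl_cons_code)

lemma computable_rev_map_code:
  assumes f: "computable f"
  shows "computable A \<Longrightarrow> computable (\<lambda>n. rev_map_code f (A n))"
  unfolding rev_map_code_def
  by (intro computable_foldl computable_cons_code computable_comp[OF f] computable_pfst
      computable_psnd computable_id computable_const)

definition append_code :: "nat \<Rightarrow> nat \<Rightarrow> nat" where
  "append_code a b = foldl (\<lambda>acc x. cons_code x acc) b (list_decode (rev_map_code (\<lambda>x. x) a))"

lemma list_decode_append_code[simp]: "list_decode (append_code a b) = list_decode a @ list_decode b"
  using foldl_cons_code[of "\<lambda>x. x"] by (simp add: append_code_def)

lemma computable_append_code:
  "computable A \<Longrightarrow> computable B \<Longrightarrow> computable (\<lambda>n. append_code (A n) (B n))"
  unfolding append_code_def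
  by (intro computable_foldl computable_rev_map_code[OF computable_id] computable_cons_code
      computable_pfst computable_psnd computable_id)

definition concat_map_code :: "(nat \<Rightarrow> nat) \<Rightarrow> nat \<Rightarrow> nat" where
  "concat_map_code f c = foldl (\<lambda>acc x. append_code acc (f x)) 0 (list_decode c)"

lemma list_decode_concat_map_code[simp]:
  "list_decode (concat_map_code f c) = concat (map (\<lambda>x. list_decode (f x)) (list_decode c))"
proof -
  have "list_decode (foldl (\<lambda>acc x. append_code acc (f x)) a xs) =
      list_decode a @ concat (map (\<lambda>x. list_decode (f x)) xs)" for a xs
    by (induction xs arbitrary: a) auto
  then show ?thesis by (simp add: concat_map_code_def)
qed

lemma computable_concat_map_code:
  assumes f: "computable f"
  shows "computable A \<Longrightarrow> computable (\<lambda>n. concat_map_code f (A n))"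
  unfolding concat_map_code_def
  by (intro computable_foldl computable_append_code computable_comp[OF f] computable_pfst
      computable_psnd computable_id computable_const)

definition drop_code :: "nat \<Rightarrow> nat \<Rightarrow> nat" where
  "drop_code i c = ((\<lambda>c. psnd (c - 1)) ^^ i) c"

lemma list_decode_drop_code[simp]: "list_decode (drop_code i c) = drop i (list_decode c)"
proof -
  have "list_decode (psnd (c - 1)) = tl (list_decode c)" for c
    by (cases c) (simp_all add: prod_decode_def prod_decode_aux.simps)
  then show ?thesis unfolding drop_code_def by (induction i) (simp_all add: drop_Suc tl_drop)
qed

lemma computable_drop_code: "computable I \<Longrightarrow> computable A \<Longrightarrow> computable (\<lambda>n. drop_code (I n) (A n))"
  unfolding drop_code_def
  by (intro computable_funpow computable_psnd computable_diff computable_id computable_const)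

definition take_code :: "nat \<Rightarrow> nat \<Rightarrow> nat" where
  "take_code l c =
    rev_map_code (\<lambda>x. x) (drop_code (length (list_decode c) - l) (rev_map_code (\<lambda>x. x) c))"

lemma list_decode_take_code[simp]: "list_decode (take_code l c) = take l (list_decode c)"
  by (cases "l \<le> length (list_decode c)") (simp_all add: take_code_def rev_drop)

lemma computable_take_code: "computable I \<Longrightarrow> computable A \<Longrightarrow> computable (\<lambda>n. take_code (I n) (A n))"
  unfolding take_code_def
  by (intro computable_rev_map_code[OF computable_id] computable_drop_code computable_diff
      computable_length)

section \<open>Evaluation with fuel\<close>

text \<open>The state of an unbounded search after \<open>t\<close> steps: \<^term>\<open>Some None\<close> while all values
  seen so far are positive, \<^term>\<open>Some (Some i)\<close> once the value \<open>0\<close> was found at \<open>i\<close>, and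
  \<^term>\<open>None\<close> if a divergent argument was met first.\<close>

definition mu_search_state :: "nat \<Rightarrow> (nat \<Rightarrow> nat option) \<Rightarrow> nat option option" where
  "mu_search_state t F = rec_nat (Some None) (\<lambda>i st. case st of
      Some None \<Rightarrow> (case F i of None \<Rightarrow> None | Some 0 \<Rightarrow> Some (Some i) | Some (Suc _) \<Rightarrow> Some None)
    | _ \<Rightarrow> st) t"

definition mu_search :: "nat \<Rightarrow> (nat \<Rightarrow> nat option) \<Rightarrow> nat option" where
  "mu_search t F = (case mu_search_state t F of Some (Some i) \<Rightarrow> Some i | _ \<Rightarrow> None)"

fun eval_fuel :: "nat \<Rightarrow> recf \<Rightarrow> nat list \<Rightarrow> nat option" where
  "eval_fuel t Zero xs = Some 0"
| "eval_fuel t Succ xs = (case xs of [] \<Rightarrow> None | x # _ \<Rightarrow> Some (Suc x))"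
| "eval_fuel t (Proj i) xs = (if i < length xs then Some (xs ! i) else None)"
| "eval_fuel t (Comp f gs) xs =
    (case those (map (\<lambda>g. eval_fuel t g xs) gs) of None \<Rightarrow> None | Some zs \<Rightarrow> eval_fuel t f zs)"
| "eval_fuel t (Prec f g) xs = (case xs of [] \<Rightarrow> None | n # ys \<Rightarrow>
    rec_nat (eval_fuel t f ys)
      (\<lambda>m acc. case acc of None \<Rightarrow> None | Some z \<Rightarrow> eval_fuel t g (z # m # ys)) n)"
| "eval_fuel t (Minim f) xs = mu_search t (\<lambda>i. eval_fuel t f (i # xs))"

lemma mu_search_state_Suc:
  "mu_search_state (Suc t) F = (case mu_search_state t F of
      Some None \<Rightarrow> (case F t of None \<Rightarrow> None | Some 0 \<Rightarrow> Some (Some t) | Some (Suc _) \<Rightarrow> Some None)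
    | _ \<Rightarrow> mu_search_state t F)"
  by (simp add: mu_search_state_def split: option.split)

lemma mu_search_state_iff:
  "(mu_search_state t F = Some None \<longleftrightarrow> (\<forall>j<t. \<exists>z. F j = Some (Suc z))) \<and>
   (mu_search_state t F = Some (Some i) \<longleftrightarrow> i < t \<and> F i = Some 0 \<and> (\<forall>j<i. \<exists>z. F j = Some (Suc z)))"
proof (induction t arbitrary: i)
  case 0
  show ?case by (simp add: mu_search_state_def)
next
  case (Suc t)
  have unique: "i = k" if "F i = Some 0" "\<forall>j<i. \<exists>z. F j = Some (Suc z)"
    "F k = Some 0" "\<forall>j<k. \<exists>z. F j = Some (Suc z)" for i k
    using that by (metis linorder_neqE_nat nat.distinct(1) option.inject)
  consider "mu_search_state t F = None" | "mu_search_state t F = Some None"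
    | k where "mu_search_state t F = Some (Some k)"
    by (metis option.exhaust)
  then show ?case
  proof cases
    case 1
    then show ?thesis using Suc.IH by (auto simp: mu_search_state_Suc less_Suc_eq)
  next
    case 2
    then show ?thesis using Suc.IH
      by (cases "F t") (auto simp: mu_search_state_Suc less_Suc_eq split: nat.splits)
  next
    case 3
    then show ?thesis using Suc.IH[of k] unique
      by (auto simp: mu_search_state_Suc less_Suc_eq)
  qed
qed

lemma mu_search_eq_Some:
  "mu_search t F = Some i \<longleftrightarrow> i < t \<and> F i = Some 0 \<and> (\<forall>j<i. \<exists>z. F j = Some (Suc z))"
  unfolding mu_search_def using mu_search_state_iff[of t F i] by (auto split: option.split)

lemma those_map_eq_Some: "those (map h xs) = Some ys \<longleftrightarrow> list_all2 (\<lambda>x y. h x = Some y) xs ys"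
proof (induction xs arbitrary: ys)
  case Nil
  then show ?case by (cases ys) auto
next
  case (Cons x xs)
  then show ?case by (cases ys; cases "h x"; cases "those (map h xs)") auto
qed

lemma eval_fuel_sound: "eval_fuel t f xs = Some y \<Longrightarrow> ev f xs y"
proof (induction t f xs arbitrary: y rule: eval_fuel.induct)
  case (1 t xs)
  then show ?case using ev_zero by simp
next
  case (2 t xs)
  then show ?case using ev_succ by (auto split: list.splits)
next
  case (3 t i xs)
  then show ?case using ev_proj by (auto split: if_splits)
next
  case (4 t f gs xs)
  then obtain zs where zs: "those (map (\<lambda>g. eval_fuel t g xs) gs) = Some zs" "eval_fuel t f zs = Some y"
    by (auto split: option.splits)
  have "list_all2 (\<lambda>g z. eval_fuel t g xs = Some z) gs zs"
    using zs(1) by (simp add: those_map_eq_Some)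
  then have "list_all2 (\<lambda>g z. ev g xs z) gs zs"
    by (auto simp: list_all2_conv_all_nth intro: "4.IH"(1)[OF nth_mem])
  then show ?case using ev_comp "4.IH"(2)[OF zs(1) zs(2)] by blast
next
  case (5 t f g xs)
  then obtain n ys where xs: "xs = n # ys" by (cases xs) simp_all
  have "ev (Prec f g) (k # ys) y"
    if "rec_nat (eval_fuel t f ys)
      (\<lambda>m acc. case acc of None \<Rightarrow> None | Some z \<Rightarrow> eval_fuel t g (z # m # ys)) k = Some y"
    for k y
    using that
  proof (induction k arbitrary: y)
    case 0
    then show ?case using "5.IH"(1)[OF xs] ev_prec0 by simp
  next
    case (Suc k)
    then obtain z where
      "rec_nat (eval_fuel t f ys)
        (\<lambda>m acc. case acc of None \<Rightarrow> None | Some z \<Rightarrow> eval_fuel t g (z # m # ys)) k = Some z"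
      "eval_fuel t g (z # k # ys) = Some y"
      by (auto split: option.splits)
    then show ?case using ev_precS Suc.IH "5.IH"(2)[OF xs] by blast
  qed
  then show ?case using "5.prems" xs by simp
next
  case (6 t f xs)
  then have y: "eval_fuel t f (y # xs) = Some 0" "\<forall>j<y. \<exists>z. eval_fuel t f (j # xs) = Some (Suc z)"
    by (simp_all add: mu_search_eq_Some)
  show ?case
  proof (rule ev_minim)
    show "ev f (y # xs) 0" using y "6.IH" by blast
    show "\<forall>m<y. \<exists>z. ev f (m # xs) z \<and> z \<noteq> 0" using y "6.IH" by blast
  qed
qed

lemma eval_fuel_complete: "ev f xs y \<Longrightarrow> eventually (\<lambda>t. eval_fuel t f xs = Some y) sequentially"
proof (induction rule: ev.induct)
  case (ev_comp xs gs zs f y)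
  have "\<forall>i\<in>{..<length gs}. eventually (\<lambda>t. eval_fuel t (gs ! i) xs = Some (zs ! i)) sequentially"
    using ev_comp(1) by (auto simp: list_all2_conv_all_nth)
  then have "eventually (\<lambda>t. \<forall>i\<in>{..<length gs}. eval_fuel t (gs ! i) xs = Some (zs ! i)) sequentially"
    by (rule eventually_ball_finite[OF finite_lessThan])
  moreover have "length gs = length zs" using ev_comp(1) by (rule list_all2_lengthD)
  ultimately have "eventually (\<lambda>t. those (map (\<lambda>g. eval_fuel t g xs) gs) = Some zs) sequentially"
    by (auto elim!: eventually_mono simp: those_map_eq_Some list_all2_conv_all_nth)
  moreover have "eventually (\<lambda>t. eval_fuel t f zs = Some y) sequentially"
    using ev_comp by blast
  ultimately show ?case by eventually_elim simp
next
  case (ev_precS f g n xs z y)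
  then have "eventually (\<lambda>t. eval_fuel t (Prec f g) (n # xs) = Some z) sequentially"
    "eventually (\<lambda>t. eval_fuel t g (z # n # xs) = Some y) sequentially"
    by blast+
  then show ?case by eventually_elim simp
next
  case (ev_minim f n xs)
  have "\<forall>m\<in>{..<n}. eventually (\<lambda>t. \<exists>z. eval_fuel t f (m # xs) = Some (Suc z)) sequentially"
  proof
    fix m assume "m \<in> {..<n}"
    then obtain z where "eventually (\<lambda>t. eval_fuel t f (m # xs) = Some z) sequentially" "z \<noteq> 0"
      using ev_minim by auto
    then show "eventually (\<lambda>t. \<exists>z. eval_fuel t f (m # xs) = Some (Suc z)) sequentially"
      using not0_implies_Suc by (auto elim: eventually_mono)
  qed
  then have "eventually (\<lambda>t. \<forall>m\<in>{..<n}. \<exists>z. eval_fuel t f (m # xs) = Some (Suc z)) sequentially"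
    by (rule eventually_ball_finite[OF finite_lessThan])
  moreover have "eventually (\<lambda>t. eval_fuel t f (n # xs) = Some 0) sequentially"
    using ev_minim by blast
  moreover have "eventually (\<lambda>t. n < t) sequentially"
    by (rule eventually_gt_at_top)
  ultimately show ?case by eventually_elim (simp add: mu_search_eq_Some)
qed simp_all

lemma ev_deterministic:
  assumes "ev f xs y" "ev f xs y'" shows "y = y'"
proof -
  have "eventually (\<lambda>t. eval_fuel t f xs = Some y \<and> eval_fuel t f xs = Some y') sequentially"
    using eval_fuel_complete[OF assms(1)] eval_fuel_complete[OF assms(2)] by (rule eventually_conj)
  then show ?thesis by (auto simp: eventually_sequentially)
qed

section \<open>Computability of the evaluator\<close>

definition option_code :: "nat option \<Rightarrow> nat" where
  "option_code x = (case x of None \<Rightarrow> 0 | Some y \<Rightarrow> Suc y)"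

lemma option_code_simps[simp]: "option_code None = 0" "option_code (Some y) = Suc y"
  by (simp_all add: option_code_def)

lemma option_code_eq_0_iff[simp]: "option_code x = 0 \<longleftrightarrow> x = None"
  by (cases x) simp_all

definition eval_code :: "recf \<Rightarrow> nat \<Rightarrow> nat" where
  "eval_code f m = option_code (eval_fuel (pfst m) f (list_decode (psnd m)))"

lemma eval_code_prod_encode[simp]:
  "eval_code f (prod_encode (t, c)) = option_code (eval_fuel t f (list_decode c))"
  by (simp add: eval_code_def)

lemma computable_eval_code_Zero: "computable (eval_code Zero)"
proof -
  have "eval_code Zero = (\<lambda>m. 1)" by (simp add: eval_code_def fun_eq_iff)
  then show ?thesis using computable_const by simp
qed

lemma computable_eval_code_Succ: "computable (eval_code Succ)"
proof -
  have "eval_code Succ = (\<lambda>m. if psnd m = 0 then 0 else Suc (Suc (pfst (psnd m - 1))))"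
  proof
    fix m
    show "eval_code Succ m = (if psnd m = 0 then 0 else Suc (Suc (pfst (psnd m - 1))))"
      by (cases "psnd m") (simp_all add: eval_code_def)
  qed
  moreover have "computable (\<lambda>m. if psnd m = 0 then 0 else Suc (Suc (pfst (psnd m - 1))))"
    by (intro computable_If decidable_eq computable_Suc computable_pfst computable_psnd
        computable_diff computable_id computable_const)
  ultimately show ?thesis by simp
qed

lemma computable_eval_code_Proj: "computable (eval_code (Proj i))"
proof -
  have "eval_code (Proj i) m =
      (if drop_code i (psnd m) = 0 then 0 else Suc (pfst (drop_code i (psnd m) - 1)))" for m
  proof (cases "drop_code i (psnd m)")
    case 0
    then have "drop i (list_decode (psnd m)) = []"
      using list_decode_drop_code[of i "psnd m"] by simp
    then show ?thesis using 0 by (simp add: eval_code_def)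
  next
    case (Suc e)
    then have drop: "drop i (list_decode (psnd m)) = pfst e # list_decode (psnd e)"
      using list_decode_drop_code[of i "psnd m"] by simp
    then have "i < length (list_decode (psnd m))"
      by (metis drop_eq_Nil list.distinct(1) not_le)
    moreover have "list_decode (psnd m) ! i = pfst e"
      using hd_drop_conv_nth[OF calculation] drop by simp
    ultimately show ?thesis using Suc by (simp add: eval_code_def)
  qed
  moreover have
    "computable (\<lambda>m. if drop_code i (psnd m) = 0 then 0 else Suc (pfst (drop_code i (psnd m) - 1)))"
    by (intro computable_If decidable_eq computable_Suc computable_pfst computable_psnd
        computable_diff computable_drop_code computable_id computable_const)
  ultimately show ?thesis by presburger
qed

definition eval_args_code :: "recf list \<Rightarrow> nat \<Rightarrow> nat" where
  "eval_args_code gs m = (case those (map (\<lambda>g. eval_fuel (pfst m) g (list_decode (psnd m))) gs) of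
      None \<Rightarrow> 0 | Some zs \<Rightarrow> Suc (list_encode zs))"

lemma computable_eval_args_code:
  "(\<And>g. g \<in> set gs \<Longrightarrow> computable (eval_code g)) \<Longrightarrow> computable (eval_args_code gs)"
proof (induction gs)
  case Nil
  have "eval_args_code [] = (\<lambda>m. 1)" by (simp add: eval_args_code_def fun_eq_iff)
  then show ?case using computable_const by simp
next
  case (Cons g gs)
  have "eval_args_code (g # gs) m = (if eval_code g m = 0 then 0 else if eval_args_code gs m = 0 then 0
      else Suc (Suc (prod_encode (eval_code g m - 1, eval_args_code gs m - 1))))" for m
    by (auto simp: eval_args_code_def eval_code_def option_code_def split: option.split)
  moreover have "computable (\<lambda>m. if eval_code g m = 0 then 0 else if eval_args_code gs m = 0 then 0
      else Suc (Suc (prod_encode (eval_code g m - 1, eval_args_code gs m - 1))))"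
    using Cons by (intro computable_If decidable_eq computable_Suc computable_prod_encode
        computable_diff computable_const) auto
  ultimately show ?case by presburger
qed

lemma computable_eval_code_Comp:
  assumes f: "computable (eval_code f)" and gs: "\<And>g. g \<in> set gs \<Longrightarrow> computable (eval_code g)"
  shows "computable (eval_code (Comp f gs))"
proof -
  have "eval_code (Comp f gs) m = (if eval_args_code gs m = 0 then 0
      else eval_code f (prod_encode (pfst m, eval_args_code gs m - 1)))" for m
    by (simp add: eval_args_code_def eval_code_def split: option.split)
  moreover have "computable (\<lambda>m. if eval_args_code gs m = 0 then 0
      else eval_code f (prod_encode (pfst m, eval_args_code gs m - 1)))"
    by (intro computable_If decidable_eq computable_comp[OF f] computable_prod_encode
        computable_pfst computable_diff computable_eval_args_code[OF gs] computable_id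
        computable_const)
  ultimately show ?thesis by presburger
qed

lemma computable_eval_code_Prec:
  assumes f: "computable (eval_code f)" and g: "computable (eval_code g)"
  shows "computable (eval_code (Prec f g))"
proof -
  define H where "H i acc m = (if acc = 0 then 0 else
      eval_code g (prod_encode (pfst m, cons_code (acc - 1) (cons_code i (psnd (psnd m - 1))))))"
    for i acc m
  have rec: "rec_nat (option_code (eval_fuel t f ys)) (\<lambda>i acc. H i acc m) j =
      option_code (rec_nat (eval_fuel t f ys)
        (\<lambda>k acc. case acc of None \<Rightarrow> None | Some z \<Rightarrow> eval_fuel t g (z # k # ys)) j)"
    if "pfst m = t" "list_decode (psnd (psnd m - 1)) = ys" for t ys j m
    using that by (induction j) (auto simp: H_def split: option.split)
  have "eval_code (Prec f g) m = (if psnd m = 0 then 0 else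
      rec_nat (eval_code f (prod_encode (pfst m, psnd (psnd m - 1)))) (\<lambda>i acc. H i acc m) (pfst (psnd m - 1)))"
    for m
    by (cases "psnd m") (simp_all add: eval_code_def rec[symmetric])
  moreover have "computable (\<lambda>m. H (pfst m) (pfst (psnd m)) (psnd (psnd m)))"
    unfolding H_def
    by (intro computable_If decidable_eq computable_comp[OF g] computable_prod_encode
        computable_cons_code computable_pfst computable_psnd computable_diff computable_id
        computable_const)
  then have "computable (\<lambda>m. if psnd m = 0 then 0 else
      rec_nat (eval_code f (prod_encode (pfst m, psnd (psnd m - 1)))) (\<lambda>i acc. H i acc m) (pfst (psnd m - 1)))"
    by (intro computable_If decidable_eq computable_rec_nat computable_comp[OF f]
        computable_prod_encode computable_pfst computable_psnd computable_diff computable_id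
        computable_const)
  ultimately show ?thesis by presburger
qed

lemma computable_eval_code_Minim:
  assumes f: "computable (eval_code f)"
  shows "computable (eval_code (Minim f))"
proof -
  define state_code :: "nat option option \<Rightarrow> nat" where
    "state_code s = (case s of None \<Rightarrow> 0 | Some None \<Rightarrow> 1 | Some (Some i) \<Rightarrow> i + 2)" for s
  define H where "H i s m = (if s = 1 then
      (if eval_code f (prod_encode (pfst m, cons_code i (psnd m))) = 0 then 0
       else if eval_code f (prod_encode (pfst m, cons_code i (psnd m))) = 1 then i + 2 else 1) else s)"
    for i s m
  have state: "state_code (mu_search_state k (\<lambda>i. eval_fuel (pfst m) f (i # list_decode (psnd m)))) =
      rec_nat 1 (\<lambda>i s. H i s m) k" for k m
  proof (induction k)
    case 0
    then show ?case by (simp add: mu_search_state_def state_code_def)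
  next
    case (Suc k)
    then show ?case unfolding mu_search_state_Suc
      by (auto simp: H_def state_code_def split: option.split option.split_asm nat.split)
  qed
  have "eval_code (Minim f) m =
      (if 2 \<le> rec_nat 1 (\<lambda>i s. H i s m) (pfst m) then rec_nat 1 (\<lambda>i s. H i s m) (pfst m) - 1 else 0)"
    for m
    unfolding state[symmetric]
    by (simp add: eval_code_def mu_search_def state_code_def split: option.split)
  moreover have "computable (\<lambda>m. H (pfst m) (pfst (psnd m)) (psnd (psnd m)))"
    unfolding H_def
    by (intro computable_If decidable_eq computable_comp[OF f] computable_prod_encode
        computable_cons_code computable_pfst computable_psnd computable_add computable_id
        computable_const)
  then have "computable (\<lambda>m. rec_nat 1 (\<lambda>i s. H i s m) (pfst m))"
    by (intro computable_rec_nat computable_pfst computable_id computable_const)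
  then have "computable (\<lambda>m.
      if 2 \<le> rec_nat 1 (\<lambda>i s. H i s m) (pfst m) then rec_nat 1 (\<lambda>i s. H i s m) (pfst m) - 1 else 0)"
    by (intro computable_If decidable_le computable_diff computable_const)
  ultimately show ?thesis by presburger
qed

lemma computable_eval_code: "computable (eval_code f)"
  by (induction f) (auto intro: computable_eval_code_Zero computable_eval_code_Succ
      computable_eval_code_Proj
      computable_eval_code_Comp computable_eval_code_Prec computable_eval_code_Minim)

section \<open>Recursively enumerable sets\<close>

lemma re_setE:
  assumes "re_set A"
  obtains Q where "decidable (\<lambda>m. Q (pfst m) (psnd m))" "\<And>n t t'. Q t n \<Longrightarrow> t \<le> t' \<Longrightarrow> Q t' n"
    "\<And>n. n \<in> A \<longleftrightarrow> (\<exists>t. Q t n)"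
proof -
  obtain f where f: "\<And>n. n \<in> A \<longleftrightarrow> (\<exists>y. ev f [n] y)" using assms unfolding re_set_def by blast
  define Q where "Q t n \<longleftrightarrow> (\<exists>s<Suc t. eval_fuel s f [n] \<noteq> None)" for t n
  show thesis
  proof (rule that)
    have "decidable (\<lambda>m. eval_code f (prod_encode (pfst m, cons_code (psnd (psnd m)) 0)) \<noteq> 0)"
      by (intro decidable_nonzero computable_comp[OF computable_eval_code] computable_prod_encode
          computable_cons_code computable_pfst computable_psnd computable_id computable_const)
    then have "decidable (\<lambda>m. eval_fuel (pfst m) f [psnd (psnd m)] \<noteq> None)"
      by simp
    then show "decidable (\<lambda>m. Q (pfst m) (psnd m))"
      unfolding Q_def
      by (intro decidable_bex_less[where P = "\<lambda>s m. eval_fuel s f [psnd m] \<noteq> None"] computable_Suc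
          computable_pfst computable_id)
  next
    show "Q t' n" if "Q t n" "t \<le> t'" for n t t'
      using that unfolding Q_def by (metis le_trans less_Suc_eq_le)
  next
    fix n
    show "n \<in> A \<longleftrightarrow> (\<exists>t. Q t n)"
    proof
      assume "n \<in> A"
      then obtain y where "ev f [n] y" using f by blast
      then obtain t where "eval_fuel t f [n] = Some y"
        using eval_fuel_complete eventually_happens' sequentially_bot by blast
      then show "\<exists>t. Q t n" unfolding Q_def by blast
    next
      assume "\<exists>t. Q t n"
      then show "n \<in> A" unfolding Q_def f using eval_fuel_sound by blast
    qed
  qed
qed

lemma re_setI:
  assumes Q: "decidable (\<lambda>m. Q (pfst m) (psnd m))" and A: "\<And>n. n \<in> A \<longleftrightarrow> (\<exists>t. Q t n)"
  shows "re_set A"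
proof -
  obtain q where q: "\<And>m. ev q [m] (if Q (pfst m) (psnd m) then 1 else 0)"
    using Q unfolding decidable_def computable_def by blast
  define test where "test = Comp diff_prog [Comp Succ [Zero], Comp q [prod_encode_prog]]"
  have test: "ev test [t, n] (if Q t n then 0 else 1)" for t n
  proof -
    have "ev test [t, n] (1 - (if Q t n then 1 else 0))"
      using ev_Comp2[OF ev_Comp1[OF ev_zero ev_succ] ev_Comp1[OF ev_prod_encode_prog q]
          ev_diff_prog]
      by (simp add: test_def)
    then show ?thesis by (cases "Q t n") simp_all
  qed
  have "n \<in> A \<longleftrightarrow> (\<exists>y. ev (Minim test) [n] y)" for n
  proof
    assume "n \<in> A"
    then have ex: "\<exists>t. Q t n" using A by blast
    have "ev (Minim test) [n] (LEAST t. Q t n)"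
    proof (rule ev_minim)
      show "ev test [LEAST t. Q t n, n] 0" using test LeastI_ex[OF ex] by presburger
      show "\<forall>m<(LEAST t. Q t n). \<exists>z. ev test [m, n] z \<and> z \<noteq> 0"
        using test not_less_Least by fastforce
    qed
    then show "\<exists>y. ev (Minim test) [n] y" by blast
  next
    assume "\<exists>y. ev (Minim test) [n] y"
    then obtain y where "ev (Minim test) [n] y" by blast
    then have "ev test [y, n] 0" by (cases rule: ev.cases) auto
    from ev_deterministic[OF this test[of y n]] have "Q y n" by (simp split: if_splits)
    then show "n \<in> A" using A by blast
  qed
  then show ?thesis unfolding re_set_def by blast
qed

lemma re_set_vimage:
  assumes B: "re_set B" and f: "computable f" and D: "decidable D"
  shows "re_set {n. D n \<and> f n \<in> B}"
proof -
  obtain Q where Q: "decidable (\<lambda>m. Q (pfst m) (psnd m))" and B: "\<And>n. n \<in> B \<longleftrightarrow> (\<exists>t. Q t n)"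
    by (rule re_setE[OF B]) blast
  have "decidable (\<lambda>m. D (psnd m) \<and> Q (pfst m) (f (psnd m)))"
    by (intro decidable_conj decidable_comp[OF D] decidable_comp2[OF Q] computable_comp[OF f]
        computable_pfst computable_psnd computable_id)
  then show ?thesis by (rule re_setI) (auto simp: B)
qed


section \<open>Free reduction\<close>

lemma inv_inv_letter[simp]: "inv_letter (inv_letter x) = x"
  by (simp add: inv_letter_def)

lemma inv_letter_eq_iff: "inv_letter x = y \<longleftrightarrow> x = inv_letter y"
  by (auto simp: inv_letter_def)


lemma reduced_iff_successively: "reduced w \<longleftrightarrow> successively (\<lambda>x y. y \<noteq> inv_letter x) w"
  by (simp add: reduced_def successively_conv_nth)

lemma reduced_Nil[simp]: "reduced []"
  by (simp add: reduced_iff_successively)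

lemma reduced_singleton[simp]: "reduced [x]"
  by (simp add: reduced_iff_successively)

lemma reduced_Cons_Cons: "reduced (x # y # ys) \<longleftrightarrow> y \<noteq> inv_letter x \<and> reduced (y # ys)"
  by (simp add: reduced_iff_successively)

lemma reduced_ConsD: "reduced (x # w) \<Longrightarrow> reduced w"
  by (cases w) (simp_all add: reduced_Cons_Cons)

lemma reduced_red_cons: "reduced w \<Longrightarrow> reduced (red_cons x w)"
  by (cases w) (auto simp: reduced_Cons_Cons dest: reduced_ConsD)

lemma red_cons_inv_letter_cancel: "reduced w \<Longrightarrow> red_cons x (red_cons (inv_letter x) w) = w"
proof (cases w)
  case (Cons y ys)
  then show "reduced w \<Longrightarrow> ?thesis" by (cases ys) (auto simp: reduced_Cons_Cons inv_letter_eq_iff)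
qed (simp add: inv_letter_eq_iff)

lemma reduce_Nil[simp]: "reduce [] = []"
  by (simp add: reduce_def)

lemma reduce_Cons: "reduce (x # w) = red_cons x (reduce w)"
  by (simp add: reduce_def)

lemma reduced_reduce: "reduced (reduce w)"
  by (induction w) (simp_all add: reduce_Cons reduced_red_cons)

lemma reduce_reduced: "reduced w \<Longrightarrow> reduce w = w"
  by (induction w rule: induct_list012) (auto simp: reduce_Cons reduced_Cons_Cons dest:
      reduced_ConsD)

lemma reduce_reduce[simp]: "reduce (reduce w) = reduce w"
  by (rule reduce_reduced[OF reduced_reduce])

lemma reduce_append_foldr: "reduce (u @ v) = foldr red_cons u (reduce v)"
  by (simp add: reduce_def)

lemma reduced_foldr_red_cons: "reduced w \<Longrightarrow> reduced (foldr red_cons u w)"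
  by (induction u) (simp_all add: reduced_red_cons)

lemma foldr_red_cons_red_cons:
  "reduced w \<Longrightarrow> foldr red_cons (red_cons x v) w = red_cons x (foldr red_cons v w)"
  by (cases v) (auto simp: red_cons_inv_letter_cancel reduced_foldr_red_cons)

lemma foldr_red_cons_reduce: "reduced w \<Longrightarrow> foldr red_cons (reduce u) w = foldr red_cons u w"
  by (induction u) (simp_all add: reduce_Cons foldr_red_cons_red_cons)

lemma reduce_append: "reduce (u @ v) = reduce (reduce u @ reduce v)"
  by (simp add: reduce_append_foldr foldr_red_cons_reduce reduced_reduce)

lemma reduce_append_left: "reduce (reduce u @ v) = reduce (u @ v)"
  by (metis reduce_append reduce_reduce)

lemma reduce_append_right: "reduce (u @ reduce v) = reduce (u @ v)"
  by (metis reduce_append reduce_reduce)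

lemma set_red_cons: "set (red_cons x w) \<subseteq> insert x (set w)"
  by (cases w) auto

lemma set_reduce: "set (reduce w) \<subseteq> set w"
proof (induction w)
  case (Cons x w)
  then show ?case using set_red_cons[of x "reduce w"] by (auto simp: reduce_Cons)
qed simp

lemma word_inv_Nil[simp]: "word_inv [] = []"
  by (simp add: word_inv_def)

lemma word_inv_Cons: "word_inv (x # w) = word_inv w @ [inv_letter x]"
  by (simp add: word_inv_def)

lemma word_inv_append: "word_inv (u @ v) = word_inv v @ word_inv u"
  by (simp add: word_inv_def)

lemma word_inv_word_inv[simp]: "word_inv (word_inv w) = w"
  by (simp add: word_inv_def rev_map comp_def)

lemma set_word_inv: "set (word_inv w) = inv_letter ` set w"
  by (simp add: word_inv_def)


lemma reduce_word_inv_append_self: "reduce (word_inv w @ w) = []"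
proof (induction w)
  case Nil then show ?case by simp
next
  case (Cons x w)
  have "reduce (inv_letter x # x # w) = reduce w"
    using red_cons_inv_letter_cancel[OF reduced_reduce, of "inv_letter x" w] by (simp add:
        reduce_Cons)
  then have "reduce (word_inv (x # w) @ x # w) = reduce (word_inv w @ reduce w)"
    by (simp add: word_inv_Cons reduce_append_foldr)
  also have "\<dots> = []" using Cons reduce_append_right by metis
  finally show ?case .
qed

lemma reduce_append_word_inv_self: "reduce (w @ word_inv w) = []"
  using reduce_word_inv_append_self[of "word_inv w"] by simp

lemma reduced_word_inv: "reduced w \<Longrightarrow> reduced (word_inv w)"
  unfolding reduced_iff_successively word_inv_def
  by (simp add: successively_map) (erule successively_mono, auto simp: inv_letter_eq_iff)

lemma reduce_word_inv: "reduce (word_inv w) = word_inv (reduce w)"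
proof -
  have "reduce (w @ word_inv (reduce w)) = []"
    by (metis reduce_append_left reduce_append_word_inv_self)
  then have "reduce (word_inv w) = reduce (word_inv w @ reduce (w @ word_inv (reduce w)))"
    by simp
  also have "\<dots> = reduce (reduce (word_inv w @ w) @ word_inv (reduce w))"
    by (simp add: reduce_append_left reduce_append_right)
  also have "\<dots> = word_inv (reduce w)"
    by (simp add: reduce_word_inv_append_self reduce_reduced reduced_word_inv reduced_reduce)
  finally show ?thesis .
qed


section \<open>Free groups and normal closures\<close>

lemma free_group_simps[simp]:
  "carrier (free_group S) = {w. set w \<subseteq> S \<times> UNIV \<and> reduced w}"
  "x \<otimes>\<^bsub>free_group S\<^esub> y = reduce (x @ y)"
  "\<one>\<^bsub>free_group S\<^esub> = []"
  by (simp_all add: free_group_def)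

lemma set_reduce_subset: "set w \<subseteq> S \<times> UNIV \<Longrightarrow> set (reduce w) \<subseteq> S \<times> UNIV"
  using set_reduce by blast

lemma set_word_inv_subset: "set w \<subseteq> S \<times> UNIV \<Longrightarrow> set (word_inv w) \<subseteq> S \<times> UNIV"
  by (auto simp: set_word_inv inv_letter_def)

lemma reduce_in_free_group: "set w \<subseteq> S \<times> UNIV \<Longrightarrow> reduce w \<in> carrier (free_group S)"
  using set_reduce_subset[of w S] reduced_reduce[of w] by simp

lemma word_inv_in_free_group: "x \<in> carrier (free_group S) \<Longrightarrow> word_inv x \<in> carrier (free_group S)"
  using set_word_inv_subset[of x S] reduced_word_inv[of x] by simp

lemma group_free_group: "group (free_group S)"
proof (rule groupI)
  fix x y assume "x \<in> carrier (free_group S)" "y \<in> carrier (free_group S)"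
  then show "x \<otimes>\<^bsub>free_group S\<^esub> y \<in> carrier (free_group S)"
    using reduce_in_free_group[of "x @ y" S] by simp
next
  show "\<one>\<^bsub>free_group S\<^esub> \<in> carrier (free_group S)" by simp
next
  fix x y z
  show "x \<otimes>\<^bsub>free_group S\<^esub> y \<otimes>\<^bsub>free_group S\<^esub> z = x \<otimes>\<^bsub>free_group S\<^esub> (y \<otimes>\<^bsub>free_group S\<^esub> z)"
    by (simp add: reduce_append_left reduce_append_right)
next
  fix x assume "x \<in> carrier (free_group S)"
  then show "\<one>\<^bsub>free_group S\<^esub> \<otimes>\<^bsub>free_group S\<^esub> x = x" by (simp add: reduce_reduced)
next
  fix x assume "x \<in> carrier (free_group S)"
  moreover have "word_inv x \<otimes>\<^bsub>free_group S\<^esub> x = \<one>\<^bsub>free_group S\<^esub>"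
    by (simp add: reduce_word_inv_append_self)
  ultimately show "\<exists>y\<in>carrier (free_group S). y \<otimes>\<^bsub>free_group S\<^esub> x = \<one>\<^bsub>free_group S\<^esub>"
    using word_inv_in_free_group by blast
qed

interpretation FG: group "free_group S" by (rule group_free_group)

lemma inv_free_group:
  assumes "x \<in> carrier (free_group S)" shows "inv\<^bsub>free_group S\<^esub> x = word_inv x"
  using FG.inv_equality[where S = S and y = "word_inv x" and x = x] assms
      word_inv_in_free_group[OF assms]
  by (simp add: reduce_word_inv_append_self)

definition relator_conjugates :: "'a set \<Rightarrow> 'a word set \<Rightarrow> 'a word set" where
  "relator_conjugates S R = {reduce (g @ r @ word_inv g) | g r. g \<in> carrier (free_group S) \<and> r \<in> R}"

lemma normal_closure_rel_eq_generate:
  "normal_closure_rel S R = generate (free_group S) (relator_conjugates S R)"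
  unfolding normal_closure_rel_def relator_conjugates_def by simp

lemma relator_conjugates_subset:
  "R \<subseteq> lists (S \<times> UNIV) \<Longrightarrow> relator_conjugates S R \<subseteq> carrier (free_group S)"
  unfolding relator_conjugates_def
proof clarify
  fix g r assume "R \<subseteq> lists (S \<times> UNIV)" "g \<in> carrier (free_group S)" "r \<in> R"
  then have "set (g @ r @ word_inv g) \<subseteq> S \<times> UNIV" using set_word_inv_subset[of g S] by auto
  then show "reduce (g @ r @ word_inv g) \<in> carrier (free_group S)" by (rule reduce_in_free_group)
qed

lemma reduce_conjugate_reduce:
  "reduce (g @ m @ word_inv g) = reduce (reduce g @ m @ word_inv (reduce g))"
proof -
  have "reduce (g @ m @ word_inv g) = reduce (reduce g @ reduce (m @ reduce (word_inv g)))"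
    by (simp add: reduce_append_left reduce_append_right)
  also have "\<dots> = reduce (reduce g @ m @ word_inv (reduce g))"
    by (simp add: reduce_word_inv reduce_append_right)
  finally show ?thesis .
qed

lemma relator_conjugates_conjugate:
  assumes R: "R \<subseteq> lists (S \<times> UNIV)" and x: "x \<in> carrier (free_group S)"
    and h: "h \<in> relator_conjugates S R"
  shows "x \<otimes>\<^bsub>free_group S\<^esub> h \<otimes>\<^bsub>free_group S\<^esub> inv\<^bsub>free_group S\<^esub> x \<in> relator_conjugates S R"
proof -
  obtain g r where g: "g \<in> carrier (free_group S)" and r: "r \<in> R"
    and h: "h = reduce (g @ r @ word_inv g)"
    using h unfolding relator_conjugates_def by blast
  have "x \<otimes>\<^bsub>free_group S\<^esub> h \<otimes>\<^bsub>free_group S\<^esub> inv\<^bsub>free_group S\<^esub> x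
      = reduce ((x @ g) @ r @ word_inv (x @ g))"
    using x by (simp add: h inv_free_group reduce_append_left reduce_append_right word_inv_append)
  also have "\<dots> = reduce (reduce (x @ g) @ r @ word_inv (reduce (x @ g)))"
    by (rule reduce_conjugate_reduce)
  finally show ?thesis
    using x g r FG.m_closed[of x S g] unfolding relator_conjugates_def by auto
qed

lemma (in group) inv_mult_cancel_left: "x \<in> carrier G \<Longrightarrow> y \<in> carrier G \<Longrightarrow> inv x \<otimes> (x \<otimes> y) = y"
  by (simp add: m_assoc[symmetric])

lemma normal_normal_closure_rel:
  assumes R: "R \<subseteq> lists (S \<times> UNIV)"
  shows "normal_closure_rel S R \<lhd> free_group S"
proof -
  let ?F = "free_group S" let ?X = "relator_conjugates S R"
  have sub: "subgroup (generate ?F ?X) ?F"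
    using FG.generate_is_subgroup[OF relator_conjugates_subset[OF R]] .
  have "x \<otimes>\<^bsub>?F\<^esub> h \<otimes>\<^bsub>?F\<^esub> inv\<^bsub>?F\<^esub> x \<in> generate ?F ?X"
    if x: "x \<in> carrier ?F" and h: "h \<in> generate ?F ?X" for x h
    using h
  proof (induction rule: generate.induct)
    case one
    have "x \<otimes>\<^bsub>?F\<^esub> \<one>\<^bsub>?F\<^esub> \<otimes>\<^bsub>?F\<^esub> inv\<^bsub>?F\<^esub> x = \<one>\<^bsub>?F\<^esub>"
      using FG.r_one[where S=S, OF x] FG.r_inv[where S=S, OF x] by (simp only:)
    then show ?case using generate.one[of ?F ?X] by (simp only:)
  next
    case (incl h)
    show ?case by (rule generate.incl[OF relator_conjugates_conjugate[OF R x incl]])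
  next
    case (inv h)
    have hc: "h \<in> carrier ?F" using inv relator_conjugates_subset[OF R] by blast
    have "x \<otimes>\<^bsub>?F\<^esub> inv\<^bsub>?F\<^esub> h \<otimes>\<^bsub>?F\<^esub> inv\<^bsub>?F\<^esub> x = inv\<^bsub>?F\<^esub> (x \<otimes>\<^bsub>?F\<^esub> h \<otimes>\<^bsub>?F\<^esub> inv\<^bsub>?F\<^esub> x)"
      using hc x by (simp del: free_group_simps add: FG.inv_mult_group FG.m_assoc)
    then show ?case using generate.inv[OF relator_conjugates_conjugate[OF R x inv]] by simp
  next
    case (eng h1 h2)
    have "h1 \<in> carrier ?F" "h2 \<in> carrier ?F"
      using subgroup.mem_carrier[OF sub eng.hyps(1)] subgroup.mem_carrier[OF sub eng.hyps(2)] by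
          auto
    then have "x \<otimes>\<^bsub>?F\<^esub> (h1 \<otimes>\<^bsub>?F\<^esub> h2) \<otimes>\<^bsub>?F\<^esub> inv\<^bsub>?F\<^esub> x
        = (x \<otimes>\<^bsub>?F\<^esub> h1 \<otimes>\<^bsub>?F\<^esub> inv\<^bsub>?F\<^esub> x) \<otimes>\<^bsub>?F\<^esub> (x \<otimes>\<^bsub>?F\<^esub> h2 \<otimes>\<^bsub>?F\<^esub> inv\<^bsub>?F\<^esub> x)"
      using x by (simp del: free_group_simps add: FG.m_assoc FG.inv_mult_cancel_left)
    then show ?case using generate.eng[OF eng.IH] by (simp only:)
  qed
  then show ?thesis unfolding normal_closure_rel_eq_generate using FG.normal_inv_iff sub by blast
qed

definition relator_conjugate :: "'a word \<times> 'a word \<times> bool \<Rightarrow> 'a word" where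
  "relator_conjugate p = (case p of (g, r, b) \<Rightarrow> g @ (if b then r else word_inv r) @ word_inv g)"

lemma reduce_relator_conjugates_in_normal_closure_rel:
  assumes R: "R \<subseteq> lists (S \<times> UNIV)" and L: "\<forall>(g, r, b)\<in>set L. set g \<subseteq> S \<times> UNIV \<and> r \<in> R"
  shows "reduce (concat (map relator_conjugate L)) \<in> normal_closure_rel S R"
  using L unfolding normal_closure_rel_eq_generate
proof (induction L)
  case Nil
  show ?case using generate.one[of "free_group S" "relator_conjugates S R"] by simp
next
  case (Cons p L)
  obtain g r b where p: "p = (g, r, b)" by (cases p)
  have g: "set g \<subseteq> S \<times> UNIV" and r: "r \<in> R" using Cons.prems p by auto
  let ?c = "reduce (reduce g @ r @ word_inv (reduce g))"
  have c: "?c \<in> relator_conjugates S R"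
    using reduce_in_free_group[OF g] r unfolding relator_conjugates_def by blast
  have "reduce (relator_conjugate p) \<in> generate (free_group S) (relator_conjugates S R)"
  proof (cases b)
    case True
    then have "reduce (relator_conjugate p) = ?c"
      using p reduce_conjugate_reduce[of g r] by (simp add: relator_conjugate_def)
    then show ?thesis using generate.incl[OF c] by simp
  next
    case False
    have "reduce (relator_conjugate p) = reduce (reduce g @ word_inv r @ word_inv (reduce g))"
      using p False reduce_conjugate_reduce[of g "word_inv r"] by (simp add: relator_conjugate_def)
    also have "\<dots> = reduce (word_inv (reduce g @ r @ word_inv (reduce g)))"
      by (simp add: word_inv_append)
    also have "\<dots> = inv\<^bsub>free_group S\<^esub> ?c"
      using c relator_conjugates_subset[OF R] by (auto simp: inv_free_group reduce_word_inv)
    finally show ?thesis using generate.inv[OF c] by simp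
  qed
  moreover have "reduce (concat (map relator_conjugate (p # L))) =
      reduce (relator_conjugate p) \<otimes>\<^bsub>free_group S\<^esub> reduce (concat (map relator_conjugate L))"
    using reduce_append[of "relator_conjugate p"] by simp
  ultimately show ?case using generate.eng Cons by fastforce
qed

lemma normal_closure_rel_relator_conjugates:
  assumes R: "R \<subseteq> lists (S \<times> UNIV)" and h: "h \<in> normal_closure_rel S R"
  obtains L where "\<forall>(g, r, b)\<in>set L. set g \<subseteq> S \<times> UNIV \<and> r \<in> R"
    "h = reduce (concat (map relator_conjugate L))"
proof -
  have "\<exists>L. (\<forall>(g, r, b)\<in>set L. set g \<subseteq> S \<times> UNIV \<and> r \<in> R) \<and>
      h = reduce (concat (map relator_conjugate L))"
    using h unfolding normal_closure_rel_eq_generate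
  proof (induction rule: generate.induct)
    case one
    show ?case by (intro exI[of _ "[]"]) simp
  next
    case (incl h)
    then obtain g r where "g \<in> carrier (free_group S)" "r \<in> R" "h = reduce (g @ r @ word_inv g)"
      unfolding relator_conjugates_def by blast
    then show ?case by (intro exI[of _ "[(g, r, True)]"]) (simp add: relator_conjugate_def)
  next
    case (inv h)
    then obtain g r where "g \<in> carrier (free_group S)" "r \<in> R" "h = reduce (g @ r @ word_inv g)"
      unfolding relator_conjugates_def by blast
    moreover have "h \<in> carrier (free_group S)" using inv relator_conjugates_subset[OF R] by blast
    ultimately show ?case
      by (intro exI[of _ "[(g, r, False)]"])
        (simp add: relator_conjugate_def inv_free_group reduce_word_inv[symmetric] word_inv_append)
  next
    case (eng h1 h2)
    then obtain L1 L2
      where "\<forall>(g, r, b)\<in>set L1. set g \<subseteq> S \<times> UNIV \<and> r \<in> R" "h1 = reduce (concat (map relator_conjugate L1))"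
        "\<forall>(g, r, b)\<in>set L2. set g \<subseteq> S \<times> UNIV \<and> r \<in> R" "h2 = reduce (concat (map relator_conjugate L2))"
      by blast
    then show ?case
      by (intro exI[of _ "L1 @ L2"]) (auto simp:
          reduce_append[of "concat (map relator_conjugate L1)"])
  qed
  then show thesis using that by blast
qed

section \<open>Words in a presented group\<close>

lemma word_eval_Nil[simp]: "word_eval G [] = \<one>\<^bsub>G\<^esub>"
  by (simp add: word_eval_def)

lemma word_eval_Cons: "word_eval G (x # u) = letter_eval G x \<otimes>\<^bsub>G\<^esub> word_eval G u"
  by (simp add: word_eval_def)

definition letter_subst :: "('g \<Rightarrow> 'a word) \<Rightarrow> 'g \<times> bool \<Rightarrow> 'a word" where
  "letter_subst ws x = (if snd x then ws (fst x) else word_inv (ws (fst x)))"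

lemma set_concat_letter_subst:
  assumes "\<And>s. s \<in> S \<Longrightarrow> set (ws s) \<subseteq> S' \<times> UNIV" and "set u \<subseteq> S \<times> UNIV"
  shows "set (concat (map (letter_subst ws) u)) \<subseteq> S' \<times> UNIV"
proof -
  have "set (letter_subst ws x) \<subseteq> S' \<times> UNIV" if "x \<in> set u" for x
  proof -
    have "fst x \<in> S" using assms(2) that mem_Times_iff by blast
    then have "set (ws (fst x)) \<subseteq> S' \<times> UNIV" using assms(1) by blast
    then show ?thesis using set_word_inv_subset[of "ws (fst x)" S'] by (simp add: letter_subst_def)
  qed
  then show ?thesis by auto
qed

lemma hom_word_eval_FactGroup:
  assumes G: "group G" and SG: "S \<subseteq> carrier G" and R: "R \<subseteq> lists (S' \<times> UNIV)"
    and h: "h \<in> hom G (FactGroup (free_group S') (normal_closure_rel S' R))"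
    and ws: "\<And>s. s \<in> S \<Longrightarrow> ws s \<in> carrier (free_group S') \<and>
      h s = normal_closure_rel S' R #>\<^bsub>free_group S'\<^esub> ws s"
    and u: "set u \<subseteq> S \<times> UNIV"
  shows "word_eval G u \<in> carrier G \<and>
    h (word_eval G u) =
      normal_closure_rel S' R #>\<^bsub>free_group S'\<^esub> reduce (concat (map (letter_subst ws) u))"
  using u
proof (induction u)
  let ?F = "free_group S'" let ?N = "normal_closure_rel S' R"
  interpret N: normal ?N ?F using normal_normal_closure_rel[OF R] .
  interpret gh: group_hom G "FactGroup ?F ?N" h
    using G N.factorgroup_is_group h by (simp add: group_hom_def group_hom_axioms_def)
  {
    case Nil
    show ?case using FG.coset_mult_one[OF N.subset] by simp
  next
    case (Cons x v)
    have x: "fst x \<in> S" using Cons.prems by auto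
    have subst: "letter_subst ws x \<in> carrier ?F"
      using ws[OF x] set_word_inv_subset[of "ws (fst x)" S'] reduced_word_inv[of "ws (fst x)"]
      by (auto simp: letter_subst_def)
    have letter: "letter_eval G x \<in> carrier G \<and> h (letter_eval G x) = ?N #>\<^bsub>?F\<^esub> letter_subst ws x"
    proof (cases "snd x")
      case True
      then show ?thesis using ws[OF x] SG x by (auto simp: letter_eval_def letter_subst_def)
    next
      case False
      have s: "fst x \<in> carrier G" using SG x by blast
      have "h (inv\<^bsub>G\<^esub> (fst x)) = set_inv\<^bsub>?F\<^esub> (?N #>\<^bsub>?F\<^esub> ws (fst x))"
        using gh.hom_inv[OF s] N.inv_FactGroup gh.hom_closed[OF s] ws[OF x] by simp
      also have "\<dots> = ?N #>\<^bsub>?F\<^esub> letter_subst ws x"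
        using ws[OF x] N.rcos_inv False by (simp add: letter_subst_def inv_free_group)
      finally show ?thesis using False s by (simp add: letter_eval_def)
    qed
    have rest: "reduce (concat (map (letter_subst ws) v)) \<in> carrier ?F"
      using Cons.prems ws set_concat_letter_subst[of S ws S' v]
      by (intro reduce_in_free_group) auto
    have "h (word_eval G (x # v)) = (?N #>\<^bsub>?F\<^esub> letter_subst ws x) <#>\<^bsub>?F\<^esub>
        (?N #>\<^bsub>?F\<^esub> reduce (concat (map (letter_subst ws) v)))"
      using letter Cons by (simp add: word_eval_Cons)
    also have "\<dots> = ?N #>\<^bsub>?F\<^esub> reduce (concat (map (letter_subst ws) (x # v)))"
      using N.rcos_sum[OF subst rest] by (simp add: reduce_append_right)
    finally show ?case using letter Cons by (simp add: word_eval_Cons)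
  }
qed

lemma word_eval_eq_one_iff_FactGroup:
  assumes G: "group G" and SG: "S \<subseteq> carrier G" and R: "R \<subseteq> lists (S' \<times> UNIV)"
    and h: "h \<in> iso G (FactGroup (free_group S') (normal_closure_rel S' R))"
    and ws: "\<And>s. s \<in> S \<Longrightarrow> ws s \<in> carrier (free_group S') \<and>
      h s = normal_closure_rel S' R #>\<^bsub>free_group S'\<^esub> ws s"
    and u: "set u \<subseteq> S \<times> UNIV"
  shows "word_eval G u = \<one>\<^bsub>G\<^esub> \<longleftrightarrow> reduce (concat (map (letter_subst ws) u)) \<in> normal_closure_rel S' R"
proof -
  let ?F = "free_group S'" let ?N = "normal_closure_rel S' R"
  let ?w = "reduce (concat (map (letter_subst ws) u))"
  interpret N: normal ?N ?F using normal_normal_closure_rel[OF R] .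
  interpret gh: group_hom G "FactGroup ?F ?N" h
    using G N.factorgroup_is_group h by (simp add: group_hom_def group_hom_axioms_def iso_def)
  have w: "?w \<in> carrier ?F"
    using u ws set_concat_letter_subst[of S ws S' u] by (intro reduce_in_free_group) auto
  have "h \<in> hom G (FactGroup ?F ?N)" using h by (simp add: iso_def)
  from hom_word_eval_FactGroup[OF G SG R this ws u]
  have eval: "word_eval G u \<in> carrier G" "h (word_eval G u) = ?N #>\<^bsub>?F\<^esub> ?w"
    by blast+
  have "inj_on h (carrier G)" using h by (simp add: iso_def bij_betw_def)
  then have "word_eval G u = \<one>\<^bsub>G\<^esub> \<longleftrightarrow> h (word_eval G u) = h \<one>\<^bsub>G\<^esub>"
    using eval(1) monoid.one_closed[OF group.is_monoid[OF G]] by (metis inj_on_eq_iff)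
  also have "\<dots> \<longleftrightarrow> ?N #>\<^bsub>?F\<^esub> ?w = ?N"
    using eval(2) by simp
  also have "\<dots> \<longleftrightarrow> ?w \<in> ?N"
    using FG.rcos_self[OF w N.subgroup_axioms] FG.coset_join2[OF w N.subgroup_axioms] by auto
  finally show ?thesis .
qed

lemma list_decode_in_lists_image:
  assumes "set (list_decode n) \<subseteq> f ` A"
  obtains w where "w \<in> lists A" "n = list_encode (map f w)"
proof -
  have "list_decode n \<in> map f ` lists A" using assms lists_image[of f A] by auto
  then show thesis using that by (metis imageE list_decode_inverse)
qed

section \<open>Codes of words\<close>

lemma list_decode_word_code[simp]: "list_decode (word_code w) = map letter_code w"
  by (simp add: word_code_def)

lemma inj_letter_code: "inj letter_code"
  by (rule injI) (auto simp: letter_code_def of_bool_def split: if_splits)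

lemma word_code_eq_iff: "word_code u = word_code v \<longleftrightarrow> u = v"
  by (metis list_decode_word_code inj_letter_code inj_map_eq_map)

lemma word_code_Nil[simp]: "word_code [] = 0"
  by (simp add: word_code_def)

lemma word_code_Cons: "word_code (x # w) = cons_code (letter_code x) (word_code w)"
  by (simp add: word_code_def cons_code_def)

lemma append_code_word_code: "append_code (word_code u) (word_code v) = word_code (u @ v)"
  by (simp flip: list_decode_eq)

definition word_decode :: "nat \<Rightarrow> nat word" where
  "word_decode n = map (inv_into UNIV letter_code) (list_decode n)"

lemma word_decode_word_code[simp]: "word_decode (word_code w) = w"
  by (simp add: word_decode_def inv_into_f_f[OF inj_letter_code] map_idI)

lemma word_code_word_decode:
  "set (list_decode n) \<subseteq> range letter_code \<Longrightarrow> word_code (word_decode n) = n"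
  by (simp add: word_code_def word_decode_def map_idI f_inv_into_f subset_iff flip: list_decode_eq)

lemma set_word_decode:
  "set (list_decode n) \<subseteq> letter_code ` (S \<times> UNIV) \<Longrightarrow> set (word_decode n) \<subseteq> S \<times> UNIV"
  by (auto simp: word_decode_def inv_into_f_f[OF inj_letter_code])

definition inv_letter_code :: "nat \<Rightarrow> nat" where
  "inv_letter_code c = prod_encode (pfst c, 1 - psnd c)"

lemma inv_letter_code_letter_code: "inv_letter_code (letter_code x) = letter_code (inv_letter x)"
  by (cases x) (simp add: inv_letter_code_def letter_code_def inv_letter_def)

lemma computable_inv_letter_code: "computable A \<Longrightarrow> computable (\<lambda>n. inv_letter_code (A n))"
  unfolding inv_letter_code_def
  by (intro computable_prod_encode computable_pfst computable_psnd computable_diff computable_const)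

definition word_inv_code :: "nat \<Rightarrow> nat" where
  "word_inv_code = rev_map_code inv_letter_code"

lemma word_inv_code_word_code: "word_inv_code (word_code w) = word_code (word_inv w)"
  by (simp add: word_inv_code_def word_inv_def rev_map inv_letter_code_letter_code flip:
      list_decode_eq)

lemma computable_word_inv_code: "computable A \<Longrightarrow> computable (\<lambda>n. word_inv_code (A n))"
  unfolding word_inv_code_def
  by (rule computable_rev_map_code[OF computable_inv_letter_code[OF computable_id]])

definition red_cons_code :: "nat \<Rightarrow> nat \<Rightarrow> nat" where
  "red_cons_code x c =
    (if c \<noteq> 0 \<and> pfst (c - 1) = inv_letter_code x then psnd (c - 1) else cons_code x c)"

lemma red_cons_code_word_code: "red_cons_code (letter_code x) (word_code w) = word_code (red_cons x w)"
proof (cases w)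
  case Nil
  then show ?thesis by (simp add: red_cons_code_def word_code_Cons)
next
  case (Cons y v)
  have "letter_code y = inv_letter_code (letter_code x) \<longleftrightarrow> y = inv_letter x"
    using inj_letter_code by (auto simp: inv_letter_code_letter_code dest: injD)
  then show ?thesis using Cons by (simp add: red_cons_code_def word_code_Cons cons_code_def)
qed

definition reduce_code :: "nat \<Rightarrow> nat" where
  "reduce_code c = foldl (\<lambda>acc x. red_cons_code x acc) 0 (list_decode (rev_map_code (\<lambda>x. x) c))"

lemma reduce_code_word_code: "reduce_code (word_code w) = word_code (reduce w)"
proof -
  have "foldl (\<lambda>acc x. red_cons_code x acc) (word_code v) (rev (map letter_code w)) =
      word_code (foldr red_cons w v)" for v
    by (induction w) (simp_all add: red_cons_code_word_code)
  from this[of "[]"] show ?thesis by (simp add: reduce_code_def reduce_def)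
qed

lemma computable_reduce_code: "computable A \<Longrightarrow> computable (\<lambda>n. reduce_code (A n))"
proof -
  have "computable (\<lambda>m. red_cons_code (pfst (psnd m)) (pfst m))"
    unfolding red_cons_code_def
    by (intro computable_If decidable_conj decidable_nonzero decidable_eq computable_pfst
        computable_psnd computable_diff computable_inv_letter_code computable_cons_code
        computable_id computable_const)
  then have "computable reduce_code"
    unfolding reduce_code_def
    by (intro computable_foldl computable_rev_map_code[OF computable_id] computable_id
        computable_const) simp
  then show "computable A \<Longrightarrow> computable (\<lambda>n. reduce_code (A n))" by (rule computable_comp)
qed

definition triple_code :: "nat word \<times> nat word \<times> bool \<Rightarrow> nat" where
  "triple_code p =
    (case p of (g, r, b) \<Rightarrow> prod_encode (word_code g, prod_encode (word_code r, of_bool b)))"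

definition triple_decode :: "nat \<Rightarrow> nat word \<times> nat word \<times> bool" where
  "triple_decode c = (word_decode (pfst c), word_decode (pfst (psnd c)), psnd (psnd c) \<noteq> 0)"

definition relator_conjugate_code :: "nat \<Rightarrow> nat" where
  "relator_conjugate_code c = append_code (pfst c)
     (append_code (if psnd (psnd c) = 0 then word_inv_code (pfst (psnd c)) else pfst (psnd c))
       (word_inv_code (pfst c)))"

lemma relator_conjugate_code_word_code:
  "relator_conjugate_code (prod_encode (word_code g, prod_encode (word_code r, k))) =
    word_code (relator_conjugate (g, r, k \<noteq> 0))"
  by (simp add: relator_conjugate_code_def relator_conjugate_def word_inv_code_word_code
      append_code_word_code)

lemma computable_relator_conjugate_code: "computable relator_conjugate_code"
  unfolding relator_conjugate_code_def
  by (intro computable_append_code computable_If decidable_eq computable_word_inv_code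
      computable_pfst computable_psnd computable_id computable_const)

lemma triple_decode_triple_code[simp]: "triple_decode (triple_code p) = p"
  by (cases p) (simp add: triple_code_def triple_decode_def)

lemma relator_conjugate_code_eq:
  assumes "set (list_decode (pfst c)) \<subseteq> range letter_code"
    and "set (list_decode (pfst (psnd c))) \<subseteq> range letter_code"
  shows "relator_conjugate_code c = word_code (relator_conjugate (triple_decode c))"
proof -
  obtain g r where "pfst c = word_code g" "pfst (psnd c) = word_code r"
    using assms word_code_word_decode by metis
  then show ?thesis
    by (simp add: relator_conjugate_code_def triple_decode_def relator_conjugate_def
        word_inv_code_word_code
        append_code_word_code)
qed

lemma concat_map_relator_conjugate_code:
  assumes "\<forall>c\<in>set (list_decode cs). set (list_decode (pfst c)) \<subseteq> range letter_code \<and>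
    set (list_decode (pfst (psnd c))) \<subseteq> range letter_code"
  shows "concat_map_code relator_conjugate_code cs =
    word_code (concat (map relator_conjugate (map triple_decode (list_decode cs))))"
proof -
  have "list_decode (relator_conjugate_code c) = map letter_code (relator_conjugate (triple_decode c))"
    if "c \<in> set (list_decode cs)" for c
    using assms that relator_conjugate_code_eq by simp
  then show ?thesis by (simp add: map_concat cong: map_cong flip: list_decode_eq)
qed

section \<open>The word problem of a recursively presented group\<close>

text \<open>A witness for \<open>n\<close> at time \<open>t\<close> is the code of a list of triples as in
  \<^const>\<open>relator_conjugate\<close>; each relator must have been accepted by \<open>Q\<close> within time \<open>t\<close>,
  which is also the bound on the code of the witness.\<close>

definition normal_closure_witness :: "nat set \<Rightarrow> (nat \<Rightarrow> nat \<Rightarrow> bool) \<Rightarrow> nat \<Rightarrow> nat \<Rightarrow> bool" where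
  "normal_closure_witness S Q t n \<longleftrightarrow> (\<exists>cs<t.
    (\<forall>c\<in>set (list_decode cs).
      (\<forall>x\<in>set (list_decode (pfst c)). x \<in> letter_code ` (S \<times> UNIV)) \<and> Q t (pfst (psnd c))) \<and>
    (\<forall>x\<in>set (list_decode n). x \<in> letter_code ` (S \<times> UNIV)) \<and>
    reduce_code n = reduce_code (concat_map_code relator_conjugate_code cs))"

lemma decidable_normal_closure_witness:
  assumes "finite S" and Q: "decidable (\<lambda>m. Q (pfst m) (psnd m))"
  shows "decidable (\<lambda>m. normal_closure_witness S Q (pfst m) (psnd m))"
  unfolding normal_closure_witness_def using assms(1)
  by (intro decidable_bex_less decidable_conj decidable_list_all decidable_comp[OF decidable_finite]
      decidable_comp2[OF Q] decidable_eq computable_reduce_code computable_concat_map_code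
      computable_relator_conjugate_code computable_pfst computable_psnd computable_id) simp_all

lemma normal_closure_witness_exists:
  assumes R: "R \<subseteq> lists (S \<times> UNIV)" and QR: "\<And>n. n \<in> word_code ` R \<longleftrightarrow> (\<exists>t. Q t n)"
    and mono: "\<And>n t t'. Q t n \<Longrightarrow> t \<le> t' \<Longrightarrow> Q t' n"
    and w: "w \<in> lists (S \<times> UNIV)" "reduce w \<in> normal_closure_rel S R"
  shows "\<exists>t. normal_closure_witness S Q t (word_code w)"
proof -
  obtain L where L: "\<forall>(g, r, b)\<in>set L. set g \<subseteq> S \<times> UNIV \<and> r \<in> R"
    and red: "reduce w = reduce (concat (map relator_conjugate L))"
    using normal_closure_rel_relator_conjugates[OF R w(2)] by metis
  let ?cs = "list_encode (map triple_code L)"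
  have "\<forall>p\<in>set L. eventually (\<lambda>t. Q t (word_code (fst (snd p)))) sequentially"
    using L QR mono by (fastforce simp: eventually_sequentially)
  then have "eventually (\<lambda>t. ?cs < t \<and> (\<forall>p\<in>set L. Q t (word_code (fst (snd p))))) sequentially"
    by (intro eventually_conj eventually_gt_at_top eventually_ball_finite) simp_all
  then obtain t where t: "?cs < t" "\<forall>p\<in>set L. Q t (word_code (fst (snd p)))"
    using eventually_happens' sequentially_bot by blast
  have "\<forall>c\<in>set (map triple_code L). set (list_decode (pfst c)) \<subseteq> range letter_code \<and>
      set (list_decode (pfst (psnd c))) \<subseteq> range letter_code"
    by (auto simp: triple_code_def split: prod.splits)
  then have "concat_map_code relator_conjugate_code ?cs = word_code (concat (map relator_conjugate L))"
    by (simp add: concat_map_relator_conjugate_code o_def)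
  then have "reduce_code (word_code w) = reduce_code (concat_map_code relator_conjugate_code ?cs)"
    using red by (simp add: reduce_code_word_code)
  moreover have "\<forall>c\<in>set (list_decode ?cs).
      (\<forall>x\<in>set (list_decode (pfst c)). x \<in> letter_code ` (S \<times> UNIV)) \<and> Q t (pfst (psnd c))"
  proof
    fix c assume "c \<in> set (list_decode ?cs)"
    then obtain g r b where "(g, r, b) \<in> set L" "c = triple_code (g, r, b)" by auto
    then show "(\<forall>x\<in>set (list_decode (pfst c)). x \<in> letter_code ` (S \<times> UNIV)) \<and> Q t (pfst (psnd c))"
      using L t(2) by (force simp: triple_code_def)
  qed
  moreover have "\<forall>x\<in>set (list_decode (word_code w)). x \<in> letter_code ` (S \<times> UNIV)" using w by auto
  ultimately show ?thesis unfolding normal_closure_witness_def using t(1) by blast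
qed

lemma normal_closure_witness_sound:
  assumes R: "R \<subseteq> lists (S \<times> UNIV)" and QR: "\<And>n. n \<in> word_code ` R \<longleftrightarrow> (\<exists>t. Q t n)"
    and witness: "normal_closure_witness S Q t n"
  shows "n \<in> word_code ` {w \<in> lists (S \<times> UNIV). reduce w \<in> normal_closure_rel S R}"
proof -
  let ?L = "letter_code ` (S \<times> UNIV)"
  obtain cs where cs: "\<forall>c\<in>set (list_decode cs). set (list_decode (pfst c)) \<subseteq> ?L \<and> Q t (pfst (psnd c))"
    and n: "set (list_decode n) \<subseteq> ?L"
    and red: "reduce_code n = reduce_code (concat_map_code relator_conjugate_code cs)"
    using witness unfolding normal_closure_witness_def by blast
  define L where "L = map triple_decode (list_decode cs)"
  have relators: "pfst (psnd c) \<in> word_code ` R" if "c \<in> set (list_decode cs)" for c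
    using cs that QR by blast
  have "concat_map_code relator_conjugate_code cs = word_code (concat (map relator_conjugate L))"
    unfolding L_def using cs relators R
    by (intro concat_map_relator_conjugate_code) (force simp: word_code_def)
  moreover have nw: "n = word_code (word_decode n)"
    using n by (metis word_code_word_decode image_mono subset_UNIV subset_trans)
  ultimately have
    "word_code (reduce (word_decode n)) = word_code (reduce (concat (map relator_conjugate L)))"
    using red by (metis reduce_code_word_code)
  then have "reduce (word_decode n) = reduce (concat (map relator_conjugate L))"
    by (simp add: word_code_eq_iff)
  moreover have "set (word_decode (pfst c)) \<subseteq> S \<times> UNIV \<and> word_decode (pfst (psnd c)) \<in> R"
    if c: "c \<in> set (list_decode cs)" for c
  proof -
    obtain r where "r \<in> R" "pfst (psnd c) = word_code r" using relators[OF c] by blast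
    moreover have "set (list_decode (pfst c)) \<subseteq> ?L" using cs c by blast
    ultimately show ?thesis using set_word_decode by simp
  qed
  then have "\<forall>(g, r, b)\<in>set L. set g \<subseteq> S \<times> UNIV \<and> r \<in> R"
    by (auto simp: L_def triple_decode_def)
  ultimately have "reduce (word_decode n) \<in> normal_closure_rel S R"
    using reduce_relator_conjugates_in_normal_closure_rel[OF R] by metis
  moreover have "word_decode n \<in> lists (S \<times> UNIV)"
    using set_word_decode[OF n] by blast
  ultimately show ?thesis using nw by blast
qed

lemma re_set_normal_closure_rel:
  assumes S: "finite S" and R: "R \<subseteq> lists (S \<times> UNIV)" and re: "re_set (word_code ` R)"
  shows "re_set (word_code ` {w \<in> lists (S \<times> UNIV). reduce w \<in> normal_closure_rel S R})"
proof -
  obtain Q where Q: "decidable (\<lambda>m. Q (pfst m) (psnd m))"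
    and mono: "\<And>n t t'. Q t n \<Longrightarrow> t \<le> t' \<Longrightarrow> Q t' n" and QR: "\<And>n. n \<in> word_code ` R \<longleftrightarrow> (\<exists>t. Q t n)"
    by (rule re_setE[OF re]) blast
  have "n \<in> word_code ` {w \<in> lists (S \<times> UNIV). reduce w \<in> normal_closure_rel S R} \<longleftrightarrow>
      (\<exists>t. normal_closure_witness S Q t n)" for n
  proof
    assume "n \<in> word_code ` {w \<in> lists (S \<times> UNIV). reduce w \<in> normal_closure_rel S R}"
    then obtain w where w: "w \<in> lists (S \<times> UNIV)" "reduce w \<in> normal_closure_rel S R" "n = word_code w"
      by blast
    show "\<exists>t. normal_closure_witness S Q t n"
      unfolding w(3) by (rule normal_closure_witness_exists) (fact R QR mono w(1) w(2))+
  next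
    assume "\<exists>t. normal_closure_witness S Q t n"
    then show "n \<in> word_code ` {w \<in> lists (S \<times> UNIV). reduce w \<in> normal_closure_rel S R}"
      using normal_closure_witness_sound[where Q = Q, OF R QR] by blast
  qed
  with decidable_normal_closure_witness[OF S Q] show ?thesis by (rule re_setI)
qed

lemma word_problem_codes_eq:
  assumes G: "group G" and SG: "S \<subseteq> carrier G" and R: "R \<subseteq> lists (S' \<times> UNIV)"
    and h: "h \<in> iso G (FactGroup (free_group S') (normal_closure_rel S' R))"
    and ws: "\<And>s. s \<in> S \<Longrightarrow> ws s \<in> carrier (free_group S') \<and>
      h s = normal_closure_rel S' R #>\<^bsub>free_group S'\<^esub> ws s"
    and subst: "\<And>w. w \<in> lists (S \<times> UNIV) \<Longrightarrow>
      subst_code (list_encode (map code w)) = word_code (concat (map (letter_subst ws) w))"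
  shows "(\<lambda>w. list_encode (map code w)) ` {w \<in> lists (S \<times> UNIV). w \<noteq> [] \<and> word_eval G w = \<one>\<^bsub>G\<^esub>} =
    {n. (n \<noteq> 0 \<and> (\<forall>c\<in>set (list_decode n). c \<in> code ` (S \<times> UNIV))) \<and>
      subst_code n \<in> word_code ` {v \<in> lists (S' \<times> UNIV). reduce v \<in> normal_closure_rel S' R}}"
    (is "?codes = {n. ?D n \<and> subst_code n \<in> ?P}")
proof (intro equalityI subsetI)
  fix n assume "n \<in> ?codes"
  then obtain w where w: "w \<in> lists (S \<times> UNIV)" "w \<noteq> []" "word_eval G w = \<one>\<^bsub>G\<^esub>"
    and n: "n = list_encode (map code w)" by blast
  have "concat (map (letter_subst ws) w) \<in> lists (S' \<times> UNIV)"
    using set_concat_letter_subst[of S ws S' w] ws w(1) by fastforce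
  moreover have "reduce (concat (map (letter_subst ws) w)) \<in> normal_closure_rel S' R"
    using word_eval_eq_one_iff_FactGroup[OF G SG R h ws] w by blast
  moreover have "n \<noteq> 0" using w(2) n by (cases w) simp_all
  ultimately show "n \<in> {n. ?D n \<and> subst_code n \<in> ?P}"
    using w(1) n subst by auto
next
  fix n assume "n \<in> {n. ?D n \<and> subst_code n \<in> ?P}"
  then have n: "n \<noteq> 0" "set (list_decode n) \<subseteq> code ` (S \<times> UNIV)" and P: "subst_code n \<in> ?P"
    by auto
  obtain w where w: "w \<in> lists (S \<times> UNIV)" "n = list_encode (map code w)"
    using n(2) by (rule list_decode_in_lists_image)
  have "reduce (concat (map (letter_subst ws) w)) \<in> normal_closure_rel S' R"
    using P subst[OF w(1)] w(2) by (auto simp: word_code_eq_iff)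
  then have "word_eval G w = \<one>\<^bsub>G\<^esub>"
    using word_eval_eq_one_iff_FactGroup[OF G SG R h ws] w(1) by blast
  moreover have "w \<noteq> []" using n(1) w(2) by auto
  ultimately show "n \<in> ?codes" using w by blast
qed

lemma re_set_word_problem:
  fixes G :: "('g, 'b) monoid_scheme" and code :: "'g \<times> bool \<Rightarrow> nat"
  assumes G: "group G" and pres: "recursively_presented G" and S: "finite S" "S \<subseteq> carrier G"
    and code: "inj_on code (S \<times> UNIV)"
  shows "re_set ((\<lambda>w. list_encode (map code w)) `
    {w \<in> lists (S \<times> UNIV). w \<noteq> [] \<and> word_eval G w = \<one>\<^bsub>G\<^esub>})"
proof -
  obtain S' :: "nat set" and R where S': "finite S'" and R: "R \<subseteq> lists (S' \<times> UNIV)"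
    and re: "re_set (word_code ` R)"
    and iso: "is_iso G (FactGroup (free_group S') (normal_closure_rel S' R))"
    using pres unfolding recursively_presented_def by blast
  let ?F = "free_group S'" let ?N = "normal_closure_rel S' R"
  obtain h where h: "h \<in> iso G (FactGroup ?F ?N)" using iso unfolding is_iso_def by blast
  define ws where "ws s = (SOME w. w \<in> carrier ?F \<and> h s = ?N #>\<^bsub>?F\<^esub> w)" for s
  have ws: "ws s \<in> carrier ?F \<and> h s = ?N #>\<^bsub>?F\<^esub> ws s" if "s \<in> S" for s
  proof -
    have "h s \<in> carrier (FactGroup ?F ?N)" using h that S(2) by (auto simp: iso_def hom_def)
    then have "\<exists>w. w \<in> carrier ?F \<and> h s = ?N #>\<^bsub>?F\<^esub> w" unfolding carrier_FactGroup by blast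
    then show ?thesis unfolding ws_def by (rule someI_ex)
  qed
  define letter_subst_code where "letter_subst_code c =
      (if c \<in> code ` (S \<times> UNIV)
       then word_code (letter_subst ws (the_inv_into (S \<times> UNIV) code c)) else 0)"
    for c
  have subst: "concat_map_code letter_subst_code (list_encode (map code w)) =
      word_code (concat (map (letter_subst ws) w))" if "w \<in> lists (S \<times> UNIV)" for w
    using that
    by (induction w) (simp_all add: letter_subst_code_def the_inv_into_f_f[OF code] flip:
        list_decode_eq)
  have "(\<lambda>w. list_encode (map code w)) ` {w \<in> lists (S \<times> UNIV). w \<noteq> [] \<and> word_eval G w = \<one>\<^bsub>G\<^esub>} =
    {n. (n \<noteq> 0 \<and> (\<forall>c\<in>set (list_decode n). c \<in> code ` (S \<times> UNIV))) \<and>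
      concat_map_code letter_subst_code n \<in> word_code ` {v \<in> lists (S' \<times> UNIV). reduce v \<in> ?N}}"
    by (rule word_problem_codes_eq[OF G S(2) R h ws subst])
  moreover have "re_set {n. (n \<noteq> 0 \<and> (\<forall>c\<in>set (list_decode n). c \<in> code ` (S \<times> UNIV))) \<and>
      concat_map_code letter_subst_code n \<in> word_code ` {v \<in> lists (S' \<times> UNIV). reduce v \<in> ?N}}"
    unfolding letter_subst_code_def using S
    by (intro re_set_vimage re_set_normal_closure_rel[OF S' R re] computable_concat_map_code
        computable_table decidable_conj decidable_nonzero decidable_list_all
        decidable_comp[OF decidable_finite] computable_psnd computable_pfst computable_id) simp_all
  ultimately show ?thesis by simp
qed

section \<open>Subshifts with recursively enumerable forbidden words\<close>

lemma length_factor[simp]: "length (factor x i n) = n"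
  by (simp add: factor_def)

lemma factor_eq_Nil_iff[simp]: "factor x i n = [] \<longleftrightarrow> n = 0"
  by (simp add: factor_def)

lemma factor_in_lists: "x \<in> full_shift A \<Longrightarrow> factor x i n \<in> lists A"
  by (auto simp: factor_def full_shift_def)

lemma take_drop_factor: "j + l \<le> n \<Longrightarrow> take l (drop j (factor x i n)) = factor x (i + int j) l"
  by (rule nth_equalityI) (auto simp: factor_def algebra_simps)

text \<open>Here \<open>P t\<close> holds for the forbidden words enumerated within \<open>t\<close> steps.\<close>

definition delayed_forbidden :: "(nat \<Rightarrow> 'a list \<Rightarrow> bool) \<Rightarrow> 'a set \<Rightarrow> 'a list set" where
  "delayed_forbidden P A =
    {w \<in> lists A. \<exists>i l. 0 < l \<and> i + l \<le> length w \<and> P (length w) (take l (drop i w))}"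

lemma shift_of_delayed_forbidden:
  assumes F: "\<And>w. w \<in> lists A \<Longrightarrow> w \<in> F \<longleftrightarrow> (\<exists>t. P t w)"
    and mono: "\<And>t t' w. P t w \<Longrightarrow> t \<le> t' \<Longrightarrow> P t' w" and "[] \<notin> F"
  shows "shift_of A (delayed_forbidden P A) = shift_of A F"
proof (intro equalityI subsetI)
  fix x assume "x \<in> shift_of A (delayed_forbidden P A)"
  then have x: "x \<in> full_shift A" "\<And>i n. factor x i n \<notin> delayed_forbidden P A"
    by (auto simp: shift_of_def)
  have "factor x i n \<notin> F" for i n
  proof
    assume forb: "factor x i n \<in> F"
    then have "0 < n" using \<open>[] \<notin> F\<close> by (metis factor_eq_Nil_iff gr0I)
    obtain t where "P t (factor x i n)" using forb F factor_in_lists[OF x(1)] by blast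
    then have "P (n + t) (take n (drop 0 (factor x i (n + t))))"
      using mono take_drop_factor[of 0 n "n + t" x i] by simp
    then have "factor x i (n + t) \<in> delayed_forbidden P A"
      using \<open>0 < n\<close> factor_in_lists[OF x(1)] unfolding delayed_forbidden_def by fastforce
    then show False using x(2) by blast
  qed
  then show "x \<in> shift_of A F" using x(1) by (simp add: shift_of_def)
next
  fix x assume "x \<in> shift_of A F"
  then have x: "x \<in> full_shift A" "\<And>i n. factor x i n \<notin> F"
    by (auto simp: shift_of_def)
  have "factor x i n \<notin> delayed_forbidden P A" for i n
  proof
    assume "factor x i n \<in> delayed_forbidden P A"
    then obtain j l where "j + l \<le> n" "P n (factor x (i + int j) l)"
      unfolding delayed_forbidden_def by (auto simp: take_drop_factor)
    then have "factor x (i + int j) l \<in> F" using F factor_in_lists[OF x(1)] by blast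
    then show False using x(2) by blast
  qed
  then show "x \<in> shift_of A (delayed_forbidden P A)" using x(1) by (simp add: shift_of_def)
qed

lemma decidable_set_delayed_forbidden:
  assumes A: "finite A" and Q: "decidable (\<lambda>m. Q (pfst m) (psnd m))"
  shows "decidable_set ((\<lambda>w. list_encode (map code w)) `
    delayed_forbidden (\<lambda>t w. Q t (list_encode (map code w))) A)"
proof -
  have take_drop:
    "take_code l (drop_code i (list_encode (map code w))) = list_encode (map code (take l (drop i w)))"
    for l i w
    by (simp add: take_map drop_map flip: list_decode_eq)
  have "(\<lambda>w. list_encode (map code w)) ` delayed_forbidden (\<lambda>t w. Q t (list_encode (map code w))) A =
    {n. (\<forall>c\<in>set (list_decode n). c \<in> code ` A) \<and>
      (\<exists>i<Suc (length (list_decode n)). \<exists>l<Suc (length (list_decode n)).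
        0 < l \<and> i + l \<le> length (list_decode n) \<and>
        Q (length (list_decode n)) (take_code l (drop_code i n)))}"
    (is "_ = {n. ?D n}")
  proof (intro equalityI subsetI)
    fix n
    assume "n \<in> (\<lambda>w. list_encode (map code w)) ` delayed_forbidden (\<lambda>t w. Q t (list_encode (map code w))) A"
    then obtain w i l where "w \<in> lists A" "n = list_encode (map code w)" "0 < l" "i + l \<le> length w"
      "Q (length w) (list_encode (map code (take l (drop i w))))"
      unfolding delayed_forbidden_def by blast
    then have "\<exists>i<Suc (length w). \<exists>l<Suc (length w).
        0 < l \<and> i + l \<le> length w \<and> Q (length w) (list_encode (map code (take l (drop i w))))"
      by (intro exI[of _ i]) (auto intro!: exI[of _ l])
    with \<open>w \<in> lists A\<close> \<open>n = list_encode (map code w)\<close> show "n \<in> {n. ?D n}"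
      by (auto simp: take_drop)
  next
    fix n assume "n \<in> {n. ?D n}"
    then have D: "?D n" by simp
    then have "set (list_decode n) \<subseteq> code ` A" by blast
    then obtain w where w: "w \<in> lists A" "n = list_encode (map code w)"
      by (rule list_decode_in_lists_image)
    from D obtain i l
      where "0 < l" "i + l \<le> length w" "Q (length w) (list_encode (map code (take l (drop i w))))"
      unfolding w(2) by (auto simp: take_drop)
    then have "w \<in> delayed_forbidden (\<lambda>t w. Q t (list_encode (map code w))) A"
      using w(1) unfolding delayed_forbidden_def by blast
    then show
      "n \<in> (\<lambda>w. list_encode (map code w)) ` delayed_forbidden (\<lambda>t w. Q t (list_encode (map code w))) A"
      using w(2) by blast
  qed
  moreover have "decidable ?D"
    using A
    by (intro decidable_conj decidable_list_all decidable_comp[OF decidable_finite]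
        decidable_bex_less decidable_less decidable_le decidable_comp2[OF Q] computable_take_code
        computable_drop_code computable_length computable_add computable_Suc computable_pfst
        computable_psnd computable_id computable_const) simp_all
  ultimately show ?thesis unfolding decidable_set_iff_decidable by simp
qed

lemma effective_subshift_shift_of_re_set:
  assumes A: "finite A" and code: "inj_on code A" and F: "F \<subseteq> lists A" "[] \<notin> F"
    and re: "re_set ((\<lambda>w. list_encode (map code w)) ` F)"
  shows "effective_subshift A (shift_of A F)"
proof -
  obtain Q where Q: "decidable (\<lambda>m. Q (pfst m) (psnd m))" and mono: "\<And>n t t'. Q t n \<Longrightarrow> t \<le> t' \<Longrightarrow> Q t' n"
    and QF: "\<And>n. n \<in> (\<lambda>w. list_encode (map code w)) ` F \<longleftrightarrow> (\<exists>t. Q t n)"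
    by (rule re_setE[OF re]) blast
  have "w \<in> F \<longleftrightarrow> (\<exists>t. Q t (list_encode (map code w)))" if w: "w \<in> lists A" for w
  proof -
    have "w \<in> F" if "v \<in> F" "list_encode (map code w) = list_encode (map code v)" for v
    proof -
      have "inj_on code (set w \<union> set v)" using w that(1) F(1) by (blast intro: inj_on_subset[OF code])
      then show ?thesis using that by (simp add: list_encode_eq inj_on_map_eq_map)
    qed
    then show ?thesis using QF[of "list_encode (map code w)"] by blast
  qed
  then have "shift_of A (delayed_forbidden (\<lambda>t w. Q t (list_encode (map code w))) A) = shift_of A F"
    using F(2) mono by (intro shift_of_delayed_forbidden) blast+
  moreover have "delayed_forbidden (\<lambda>t w. Q t (list_encode (map code w))) A \<subseteq> lists A"
    by (auto simp: delayed_forbidden_def)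
  ultimately show ?thesis
    unfolding effective_subshift_def using code decidable_set_delayed_forbidden[OF A Q] by blast
qed

lemma skeleton_eq_shift_of:
  "skeleton G S = shift_of (S \<times> UNIV) {w \<in> lists (S \<times> UNIV). w \<noteq> [] \<and> word_eval G w = \<one>\<^bsub>G\<^esub>}"
proof -
  have "(\<forall>i n. 0 < n \<longrightarrow> word_eval G (factor x i n) \<noteq> \<one>\<^bsub>G\<^esub>) \<longleftrightarrow>
      (\<forall>i n. factor x i n \<notin> {w \<in> lists (S \<times> UNIV). w \<noteq> [] \<and> word_eval G w = \<one>\<^bsub>G\<^esub>})"
    if "x \<in> full_shift (S \<times> UNIV)" for x
    using factor_in_lists[OF that] by (simp add: imp_conv_disj)
  then show ?thesis unfolding skeleton_def shift_of_def by blast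
qed

theorem proposition4:
  fixes G :: "('g, 'b) monoid_scheme" and S :: "'g set"
  assumes "group G"
    and "recursively_presented G"
    and "finite S" and "S \<subseteq> carrier G" and "generate G S = carrier G"
  shows "effective_subshift (S \<times> UNIV) (skeleton G S)"
proof -
  have fin: "finite (S \<times> (UNIV :: bool set))" using assms(3) by simp
  then obtain code :: "'g \<times> bool \<Rightarrow> nat" where code: "inj_on code (S \<times> UNIV)"
    using finite_imp_inj_to_nat_seg by blast
  let ?W = "{w \<in> lists (S \<times> UNIV). w \<noteq> [] \<and> word_eval G w = \<one>\<^bsub>G\<^esub>}"
  have "re_set ((\<lambda>w. list_encode (map code w)) ` ?W)"
    using re_set_word_problem[OF assms(1-4) code] .
  then have "effective_subshift (S \<times> UNIV) (shift_of (S \<times> UNIV) ?W)"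
    using fin code by (intro effective_subshift_shift_of_re_set) auto
  then show ?thesis by (simp add: skeleton_eq_shift_of)
qed

end
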